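(* Let $A$ be a finite alphabet with $|A|\ge 2$ and $k\ge 1$. Let $T_n = \{\langle\vec h\rangle \mid \vec h \in \mathcal{R}_{\le n}^k\}$ be the set of subgroups of $F(A)$ generated by a $k$-tuple of reduced words of length at most $n$, and let $\mathbb{Q}_n$ be the uniform probability law on $T_n$. Let $X_n$ be the set of subgroups in $T_n$ that are both malnormal and pure. Then $1-\mathbb{Q}_n(X_n) = \mathcal{O}(e^{-cn})$ for some $c>0$.
   Context: $F(A)$ is the free group on $A$, identified with reduced words over $\tilde A = A\cup\bar A$ ($\bar a$ representing $a^{-1}$; a word is reduced if it has no factor $a\bar a$ or $\bar a a$); $\mathcal{R}_{\le n}$ is the set of reduced words of length at most $n$. A subgroup $H$ of $F(A)$ is malnormal if $g^{-1}Hg\cap H = \{1\}$ for every $g\notin H$, and pure if $x^m\in H$ with $m\ne 0$ implies $x\in H$ for every $x\in F(A)$. *)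

theory Defs
  imports "HOL-Algebra.Group" "HOL-Algebra.Generated_Groups" "HOL-Library.Landau_Symbols"
begin

text \<open>Letters of the extended alphabet: (a, False) represents a, (a, True) represents its
  formal inverse a-bar.\<close>
type_synonym 'a letter = "'a \<times> bool"

definition inv_letter :: "'a letter \<Rightarrow> 'a letter" where
  "inv_letter x = (fst x, \<not> snd x)"

fun reduced :: "'a letter list \<Rightarrow> bool" where
  "reduced [] = True"
| "reduced [x] = True"
| "reduced (x # y # ys) = (y \<noteq> inv_letter x \<and> reduced (y # ys))"

fun reduce :: "'a letter list \<Rightarrow> 'a letter list" where
  "reduce [] = []"
| "reduce (x # xs) =
     (case reduce xs of [] \<Rightarrow> [x]
      | y # ys \<Rightarrow> (if y = inv_letter x then ys else x # y # ys))"

definition free_grp :: "'a set \<Rightarrow> ('a letter list) monoid" where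
  "free_grp A = \<lparr> carrier = {w. reduced w \<and> fst ` set w \<subseteq> A},
                  mult = (\<lambda>u v. reduce (u @ v)),
                  one = [] \<rparr>"

definition red_le :: "'a set \<Rightarrow> nat \<Rightarrow> 'a letter list set" where
  "red_le A n = {w \<in> carrier (free_grp A). length w \<le> n}"

definition T_set :: "'a set \<Rightarrow> nat \<Rightarrow> nat \<Rightarrow> 'a letter list set set" where
  "T_set A k n = (\<lambda>hs. generate (free_grp A) (set hs)) ` {hs. length hs = k \<and> set hs \<subseteq> red_le A n}"

definition malnormal :: "('g, 'b) monoid_scheme \<Rightarrow> 'g set \<Rightarrow> bool" where
  "malnormal G H \<longleftrightarrow>
     (\<forall>g \<in> carrier G - H. {inv\<^bsub>G\<^esub> g \<otimes>\<^bsub>G\<^esub> h \<otimes>\<^bsub>G\<^esub> g | h. h \<in> H} \<inter> H = {\<one>\<^bsub>G\<^esub>})"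

definition pure :: "('g, 'b) monoid_scheme \<Rightarrow> 'g set \<Rightarrow> bool" where
  "pure G H \<longleftrightarrow>
     (\<forall>x \<in> carrier G. \<forall>m::int. m \<noteq> 0 \<and> x [^]\<^bsub>G\<^esub> m \<in> H \<longrightarrow> x \<in> H)"

definition X_set :: "'a set \<Rightarrow> nat \<Rightarrow> nat \<Rightarrow> 'a letter list set set" where
  "X_set A k n = {H \<in> T_set A k n. malnormal (free_grp A) H \<and> pure (free_grp A) H}"

definition Q_X :: "'a set \<Rightarrow> nat \<Rightarrow> nat \<Rightarrow> real" where
  "Q_X A k n = real (card (X_set A k n)) / real (card (T_set A k n))"

end

theory Submission
  imports Defs "HOL-Real_Asymp.Real_Asymp"
begin

text \<open>Let l = n div 8. Call a tuple of reduced words of length at most n a window tuple if all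
  its words have length at least n - l and no subword of length l occurs twice, at different
  places or with opposite orientations, among the words and their inverses. This is a small
  cancellation condition: in a reduced product of generators and their inverses, adjacent factors
  cancel fewer than l letters, so every element of the subgroup starts with most of one generator
  and ends with most of another. From this a minimal length argument shows that a conjugate
  g\<inverse> h g of a nontrivial element h lies in the subgroup only if g does, i.e. the subgroup
  is malnormal; purity follows, since x commutes with its power x^m.
  A tuple fails to be a window tuple only if one of polynomially many events occurs, each of
  which forces l letters of some word, and so has probability at most 2 (2|A| - 1)^-l.
  Finally, a window tuple consists of nontrivial elements of length at most n of the subgroup it
  generates, and there are at most 2k of those; so each subgroup arises from at most (2k)^k window
  tuples, and the error bound passes from tuples to subgroups.\<close>

section \<open>Free reduction\<close>

lemma inv_letter_inv_letter[simp]: "inv_letter (inv_letter x) = x"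
  by (simp add: inv_letter_def)

lemma inv_letter_neq[simp]: "inv_letter x \<noteq> x" "x \<noteq> inv_letter x"
  by (auto simp: inv_letter_def prod_eq_iff)

lemma fst_inv_letter[simp]: "fst (inv_letter x) = fst x"
  by (simp add: inv_letter_def)

definition inv_word :: "'a letter list \<Rightarrow> 'a letter list" where
  "inv_word w = rev (map inv_letter w)"

lemma inv_word_Nil[simp]: "inv_word [] = []"
  by (simp add: inv_word_def)

lemma inv_word_Cons: "inv_word (x # w) = inv_word w @ [inv_letter x]"
  by (simp add: inv_word_def)

lemma inv_word_append[simp]: "inv_word (u @ v) = inv_word v @ inv_word u"
  by (simp add: inv_word_def)

lemma inv_word_inv_word[simp]: "inv_word (inv_word w) = w"
  by (simp add: inv_word_def rev_map comp_def)

lemma length_inv_word[simp]: "length (inv_word w) = length w"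
  by (simp add: inv_word_def)

lemma inv_word_eq_Nil_iff[simp]: "inv_word w = [] \<longleftrightarrow> w = []"
  by (simp add: inv_word_def)

lemma fst_set_inv_word[simp]: "fst ` set (inv_word w) = fst ` set w"
  by (force simp: inv_word_def image_iff)

lemma inv_word_eq_iff: "inv_word u = inv_word v \<longleftrightarrow> u = v"
  by (metis inv_word_inv_word)

lemma nth_inv_word: "i < length w \<Longrightarrow> inv_word w ! i = inv_letter (w ! (length w - Suc i))"
  by (simp add: inv_word_def rev_nth)

lemma take_inv_word: "take n (inv_word w) = inv_word (drop (length w - n) w)"
  by (simp add: inv_word_def take_map take_rev drop_map)

lemma drop_inv_word: "drop n (inv_word w) = inv_word (take (length w - n) w)"
  by (simp add: inv_word_def drop_map drop_rev take_map)

lemma window_inv_word: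
  assumes "p + l \<le> length h"
  shows "take l (drop p (inv_word h)) = inv_word (take l (drop (length h - p - l) h))"
proof -
  have "take l (drop p (inv_word h)) = take l (inv_word (take (length h - p) h))"
    by (simp add: drop_inv_word)
  also have "\<dots> = inv_word (drop (length h - p - l) (take (length h - p) h))"
    using assms by (simp add: take_inv_word)
  also have "drop (length h - p - l) (take (length h - p) h) = take l (drop (length h - p - l) h)"
    using assms by (simp add: take_drop)
  finally show ?thesis .
qed

lemma nth_inv_word_window:
  assumes "t < l" "q + l \<le> length x"
  shows "inv_word (take l (drop q x)) ! t = inv_letter (x ! (q + l - 1 - t))"
  using assms by (simp add: nth_inv_word)

lemma reduced_Cons: "reduced (x # xs) \<longleftrightarrow> reduced xs \<and> (xs \<noteq> [] \<longrightarrow> hd xs \<noteq> inv_letter x)"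
  by (cases xs) auto

lemma reduced_append:
  "reduced (xs @ ys) \<longleftrightarrow> reduced xs \<and> reduced ys \<and>
     (xs \<noteq> [] \<longrightarrow> ys \<noteq> [] \<longrightarrow> hd ys \<noteq> inv_letter (last xs))"
  by (induction xs) (auto simp: reduced_Cons)

lemma reduced_iff_nth:
  "reduced w \<longleftrightarrow> (\<forall>i. Suc i < length w \<longrightarrow> w ! Suc i \<noteq> inv_letter (w ! i))"
proof (induction w)
  case (Cons x w)
  show ?case
  proof
    assume r: "reduced (x # w)"
    show "\<forall>i. Suc i < length (x # w) \<longrightarrow> (x # w) ! Suc i \<noteq> inv_letter ((x # w) ! i)"
    proof (intro allI impI)
      fix i assume i: "Suc i < length (x # w)"
      show "(x # w) ! Suc i \<noteq> inv_letter ((x # w) ! i)"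
      proof (cases i)
        case 0
        then show ?thesis using r i by (cases w) auto
      next
        case (Suc j)
        then show ?thesis using r i Cons.IH by (auto simp: reduced_Cons)
      qed
    qed
  next
    assume h: "\<forall>i. Suc i < length (x # w) \<longrightarrow> (x # w) ! Suc i \<noteq> inv_letter ((x # w) ! i)"
    have "reduced w"
      using h Cons.IH by (metis Suc_less_eq length_Cons nth_Cons_Suc)
    moreover have "w \<noteq> [] \<longrightarrow> hd w \<noteq> inv_letter x"
      using h[rule_format, of 0] by (cases w) auto
    ultimately show "reduced (x # w)" by (simp add: reduced_Cons)
  qed
qed simp

lemma reduced_inv_word[simp]: "reduced (inv_word w) \<longleftrightarrow> reduced w"
proof (induction w)
  case (Cons x w)
  then show ?case
    by (cases w) (auto simp: inv_word_Cons reduced_append reduced_Cons inv_word_def last_rev hd_map)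
qed simp

lemma reduced_take: "reduced w \<Longrightarrow> reduced (take n w)"
  by (metis append_take_drop_id reduced_append)

lemma reduced_drop: "reduced w \<Longrightarrow> reduced (drop n w)"
  by (metis append_take_drop_id reduced_append)

lemma inv_word_neq_self:
  assumes "reduced w" "w \<noteq> []"
  shows "inv_word w \<noteq> w"
proof
  assume e: "inv_word w = w"
  let ?L = "length w"
  have mirror: "w ! i = inv_letter (w ! (?L - Suc i))" if "i < ?L" for i
    using e nth_inv_word that by metis
  show False
  proof (cases "even ?L")
    case True
    then obtain j where "?L = 2 * j" by blast
    with assms(2) obtain m where m: "?L = 2 * Suc m" by (cases j) auto
    have "w ! Suc m = inv_letter (w ! m)"
      using mirror[of m] m by simp
    moreover have "Suc m < ?L" using m by simp
    ultimately show False using assms(1) by (simp add: reduced_iff_nth)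
  next
    case False
    then obtain m where m: "?L = 2 * m + 1" by (metis oddE)
    then show False using mirror[of m] by simp
  qed
qed

lemma reduced_append_inv_word_imp_Nil: "reduced (x @ inv_word x) \<Longrightarrow> x = []"
  by (cases x rule: rev_cases) (auto simp: reduced_append inv_word_def)

definition cons_reduce :: "'a letter \<Rightarrow> 'a letter list \<Rightarrow> 'a letter list" where
  "cons_reduce x ys =
     (case ys of [] \<Rightarrow> [x] | y # ys' \<Rightarrow> (if y = inv_letter x then ys' else x # y # ys'))"

lemma reduce_Cons_eq: "reduce (x # xs) = cons_reduce x (reduce xs)"
  by (simp add: cons_reduce_def)

lemma reduced_cons_reduce: "reduced ys \<Longrightarrow> reduced (cons_reduce x ys)"
  by (cases ys) (auto simp: cons_reduce_def reduced_Cons)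

lemma reduced_reduce[simp]: "reduced (reduce w)"
  by (induction w) (auto simp: reduce_Cons_eq reduced_cons_reduce simp del: reduce.simps(2))

lemma reduce_reduced: "reduced w \<Longrightarrow> reduce w = w"
  by (induction w)
    (auto simp: reduce_Cons_eq reduced_Cons cons_reduce_def split: list.splits simp del: reduce.simps(2))

lemma reduce_reduce[simp]: "reduce (reduce w) = reduce w"
  by (simp add: reduce_reduced)

lemma cons_reduce_inv_letter: "reduced z \<Longrightarrow> cons_reduce x (cons_reduce (inv_letter x) z) = z"
  by (cases z) (auto simp: cons_reduce_def reduced_Cons split: list.splits)

lemma reduce_append_reduce_right[simp]: "reduce (xs @ reduce ys) = reduce (xs @ ys)"
  by (induction xs) (auto simp: reduce_Cons_eq simp del: reduce.simps(2))

lemma reduce_cons_reduce_append: "reduce (cons_reduce x r @ ys) = cons_reduce x (reduce (r @ ys))"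
proof (cases r)
  case (Cons y r')
  show ?thesis
  proof (cases "y = inv_letter x")
    case True
    then have "cons_reduce x (reduce (r @ ys))
        = cons_reduce x (cons_reduce (inv_letter x) (reduce (r' @ ys)))"
      using Cons by (simp add: reduce_Cons_eq del: reduce.simps(2))
    also have "\<dots> = reduce (r' @ ys)" by (simp add: cons_reduce_inv_letter)
    finally show ?thesis using Cons True by (simp add: cons_reduce_def)
  qed (use Cons in \<open>simp add: cons_reduce_def reduce_Cons_eq del: reduce.simps(2)\<close>)
qed (simp add: cons_reduce_def reduce_Cons_eq del: reduce.simps(2))

lemma reduce_append_reduce_left[simp]: "reduce (reduce xs @ ys) = reduce (xs @ ys)"
  by (induction xs) (auto simp: reduce_Cons_eq reduce_cons_reduce_append simp del: reduce.simps(2))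

lemma reduce_append_reduce_middle[simp]: "reduce (xs @ reduce ys @ zs) = reduce (xs @ ys @ zs)"
  by (metis reduce_append_reduce_left reduce_append_reduce_right)

lemma reduce_append_inv_word_append: "reduce (z @ inv_word z @ ys) = reduce ys"
proof (induction z arbitrary: ys)
  case (Cons a z)
  have "reduce ((a # z) @ inv_word (a # z) @ ys)
      = cons_reduce a (reduce (z @ inv_word z @ (inv_letter a # ys)))"
    by (simp add: inv_word_Cons reduce_Cons_eq del: reduce.simps(2))
  also have "\<dots> = cons_reduce a (reduce (inv_letter a # ys))" using Cons by simp
  also have "\<dots> = reduce ys"
    by (simp add: reduce_Cons_eq cons_reduce_inv_letter del: reduce.simps(2))
  finally show ?case .
qed simp

lemma reduce_inv_word_append_append: "reduce (inv_word z @ z @ ys) = reduce ys"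
  using reduce_append_inv_word_append[of "inv_word z"] by simp

lemma reduce_cancel_middle: "reduce (xs @ z @ inv_word z @ ys) = reduce (xs @ ys)"
  by (metis reduce_append_reduce_right reduce_append_inv_word_append)

lemma reduce_cancel_middle': "reduce (xs @ inv_word z @ z @ ys) = reduce (xs @ ys)"
  by (metis reduce_append_reduce_right reduce_inv_word_append_append)

lemma reduce_append_inv_word[simp]: "reduce (z @ inv_word z) = []"
  using reduce_append_inv_word_append[of z "[]"] by simp

lemma reduce_inv_word_append[simp]: "reduce (inv_word z @ z) = []"
  using reduce_inv_word_append_append[of z "[]"] by simp

lemma reduce_cancel_right[simp]: "reduce (xs @ z @ inv_word z) = reduce xs"
  using reduce_cancel_middle[of xs z "[]"] by simp

lemma reduce_cancel_right'[simp]: "reduce (xs @ inv_word z @ z) = reduce xs"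
  using reduce_cancel_middle'[of xs z "[]"] by simp

lemma inv_word_reduce[simp]: "inv_word (reduce w) = reduce (inv_word w)"
proof -
  have "reduce (inv_word w) = reduce (inv_word w @ w @ inv_word (reduce w))"
    by (metis append.right_neutral reduce.simps(1) reduce_append_inv_word_append
        reduce_append_reduce_left reduce_append_reduce_middle)
  also have "\<dots> = inv_word (reduce w)"
    by (simp add: reduce_inv_word_append_append reduce_reduced)
  finally show ?thesis by simp
qed

lemma length_reduce_le: "length (reduce w) \<le> length w"
proof (induction w)
  case (Cons x w)
  then show ?case
    by (cases "reduce w") (auto simp: reduce_Cons_eq cons_reduce_def simp del: reduce.simps(2))
qed simp

lemma set_reduce_subset: "set (reduce w) \<subseteq> set w"
proof (induction w)
  case (Cons x w)
  then show ?case
    by (cases "reduce w") (auto simp: reduce_Cons_eq cons_reduce_def simp del: reduce.simps(2))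
qed simp

lemma reduce_append_cancellation:
  assumes "reduced x" "reduced y"
  obtains c where "c \<le> length x" "c \<le> length y" "take c y = take c (inv_word x)"
    "reduce (x @ y) = take (length x - c) x @ drop c y"
  using assms
proof (induction "length x" arbitrary: x y thesis)
  case 0
  then show ?case by (auto simp: reduce_reduced)
next
  case (Suc m)
  then obtain x0 a where x: "x = x0 @ [a]" by (metis length_Suc_conv_rev)
  have rx0: "reduced x0" using Suc.prems x by (simp add: reduced_append)
  show ?case
  proof (cases "y \<noteq> [] \<and> hd y = inv_letter a")
    case True
    then obtain y0 where y: "y = inv_letter a # y0" by (cases y) auto
    have "reduced y0" using Suc.prems y by (simp add: reduced_Cons)
    then obtain c where c: "c \<le> length x0" "c \<le> length y0" "take c y0 = take c (inv_word x0)"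
      "reduce (x0 @ y0) = take (length x0 - c) x0 @ drop c y0"
      using Suc.hyps(1)[of x0 y0] x Suc.hyps(2) rx0 by auto
    have "reduce (x @ y) = reduce (x0 @ [a] @ inv_word [a] @ y0)"
      using x y by (simp add: inv_word_def)
    also have "\<dots> = reduce (x0 @ y0)" by (rule reduce_cancel_middle)
    finally show ?thesis
      using Suc.prems(1)[of "Suc c"] c x y by (auto simp: inv_word_def)
  next
    case False
    then have "reduced (x @ y)"
      using Suc.prems x by (auto simp: reduced_append reduced_Cons)
    then show ?thesis using Suc.prems(1)[of 0] by (simp add: reduce_reduced)
  qed
qed

section \<open>The free group\<close>

lemma free_grp_simps[simp]:
  "carrier (free_grp A) = {w. reduced w \<and> fst ` set w \<subseteq> A}"
  "x \<otimes>\<^bsub>free_grp A\<^esub> y = reduce (x @ y)"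
  "\<one>\<^bsub>free_grp A\<^esub> = []"
  by (simp_all add: free_grp_def)

lemma reduce_append_in_carrier:
  "x \<in> carrier (free_grp A) \<Longrightarrow> y \<in> carrier (free_grp A) \<Longrightarrow> reduce (x @ y) \<in> carrier (free_grp A)"
  using set_reduce_subset[of "x @ y"] by (auto simp: image_subset_iff)

lemma group_free_grp: "group (free_grp A)"
proof (rule groupI)
  fix x y assume "x \<in> carrier (free_grp A)" "y \<in> carrier (free_grp A)"
  then show "x \<otimes>\<^bsub>free_grp A\<^esub> y \<in> carrier (free_grp A)"
    using reduce_append_in_carrier by simp
next
  fix x y z
  show "x \<otimes>\<^bsub>free_grp A\<^esub> y \<otimes>\<^bsub>free_grp A\<^esub> z = x \<otimes>\<^bsub>free_grp A\<^esub> (y \<otimes>\<^bsub>free_grp A\<^esub> z)"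
    by simp
next
  fix x assume x: "x \<in> carrier (free_grp A)"
  then show "\<exists>y\<in>carrier (free_grp A). y \<otimes>\<^bsub>free_grp A\<^esub> x = \<one>\<^bsub>free_grp A\<^esub>"
    by (intro bexI[of _ "inv_word x"]) auto
qed (auto simp: reduce_reduced)

lemma inv_free_grp: "x \<in> carrier (free_grp A) \<Longrightarrow> inv\<^bsub>free_grp A\<^esub> x = inv_word x"
  by (intro group.inv_equality[OF group_free_grp]) auto

text \<open>Every nontrivial element is conjugate to a cyclically reduced word c, and the powers of
  p c p\<inverse> are the reduced words p c^m p\<inverse>; so the free group is torsion free.\<close>

lemma cyclically_reduced_conjugate:
  assumes "reduced x" "x \<noteq> []"
  obtains p c where "x = p @ c @ inv_word p" "c \<noteq> []" "reduced (c @ c)"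
  using assms
proof (induction "length x" arbitrary: x thesis rule: less_induct)
  case less
  show ?case
  proof (cases "reduced (x @ x)")
    case True
    then show ?thesis using less.prems(1)[of "[]" x] less.prems(3) by simp
  next
    case False
    then have hl: "hd x = inv_letter (last x)" using less.prems by (auto simp: reduced_append)
    obtain a y e where x: "x = a # y @ [e]"
      using less.prems(3) hl
      by (metis append_butlast_last_id inv_letter_neq(1) last_ConsL list.collapse list.sel(1))
    have ea: "e = inv_letter a" using hl x by simp
    have "y \<noteq> []" using less.prems(2) x ea by auto
    moreover have "reduced y" using less.prems(2) x by (simp add: reduced_Cons reduced_append)
    ultimately obtain p c where "y = p @ c @ inv_word p" "c \<noteq> []" "reduced (c @ c)"
      using less.hyps[of y] x by auto
    then show ?thesis using less.prems(1)[of "a # p" c] x ea by (simp add: inv_word_Cons)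
  qed
qed

lemma reduced_concat_replicate:
  assumes "reduced (c @ c)" "c \<noteq> []"
  shows "reduced (concat (replicate (Suc m) c))"
proof (induction m)
  case (Suc m)
  have "concat (replicate (Suc (Suc m)) c) = c @ concat (replicate (Suc m) c)" by simp
  moreover have "hd (concat (replicate (Suc m) c)) = hd c" using assms(2) by simp
  ultimately show ?case
    using Suc assms by (simp add: reduced_append del: replicate.simps concat.simps)
qed (use assms in \<open>simp add: reduced_append\<close>)

lemma last_concat_replicate: "c \<noteq> [] \<Longrightarrow> last (concat (replicate (Suc m) c)) = last c"
  by (induction m) auto

lemma free_grp_pow_conjugate:
  assumes x: "x = p @ c @ inv_word p" "reduced x" "c \<noteq> []" "reduced (c @ c)"
  shows "x [^]\<^bsub>free_grp A\<^esub> (Suc m) = p @ concat (replicate (Suc m) c) @ inv_word p"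
proof (induction m)
  case 0
  then show ?case using x by (simp add: reduce_reduced)
next
  case (Suc m)
  define C where "C = concat (replicate (Suc m) c)"
  have "x [^]\<^bsub>free_grp A\<^esub> (Suc (Suc m)) = reduce (p @ C @ inv_word p @ p @ c @ inv_word p)"
    using Suc x(1) by (simp add: C_def)
  also have "\<dots> = reduce (p @ (C @ c) @ inv_word p)"
    by (metis append_assoc reduce_cancel_middle')
  also have "C @ c = concat (replicate (Suc (Suc m)) c)"
    unfolding C_def by (induction m) auto
  also have "reduced (p @ concat (replicate (Suc (Suc m)) c) @ inv_word p)"
    using x reduced_concat_replicate[OF x(4,3), of "Suc m"] last_concat_replicate[OF x(3)]
      hd_concat[of "replicate (Suc (Suc m)) c"]
    by (auto simp: reduced_append simp del: replicate.simps concat.simps)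
  then have "reduce (p @ concat (replicate (Suc (Suc m)) c) @ inv_word p)
      = p @ concat (replicate (Suc (Suc m)) c) @ inv_word p"
    by (rule reduce_reduced)
  finally show ?case .
qed

lemma free_grp_nat_pow_neq_one:
  assumes "x \<in> carrier (free_grp A)" "x \<noteq> []"
  shows "x [^]\<^bsub>free_grp A\<^esub> (Suc m) \<noteq> []"
proof -
  have "reduced x" using assms(1) by simp
  then obtain p c where pc: "x = p @ c @ inv_word p" "c \<noteq> []" "reduced (c @ c)"
    using assms(2) by (rule cyclically_reduced_conjugate)
  have "x [^]\<^bsub>free_grp A\<^esub> (Suc m) = p @ concat (replicate (Suc m) c) @ inv_word p"
    using free_grp_pow_conjugate[OF pc(1) _ pc(2,3)] assms(1) by simp
  then show ?thesis using pc(2) by simp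
qed

lemma free_grp_int_pow_neq_one:
  assumes x: "x \<in> carrier (free_grp A)" "x \<noteq> []" and "m \<noteq> (0::int)"
  shows "x [^]\<^bsub>free_grp A\<^esub> m \<noteq> []"
proof (cases "m < 0")
  case True
  then obtain k where k: "nat (- m) = Suc k"
    by (metis gr0_implies_Suc neg_0_less_iff_less zero_less_nat_eq)
  have "x [^]\<^bsub>free_grp A\<^esub> (Suc k) \<in> carrier (free_grp A)"
    using monoid.nat_pow_closed[OF group.is_monoid[OF group_free_grp] x(1)] .
  moreover have "x [^]\<^bsub>free_grp A\<^esub> m = inv\<^bsub>free_grp A\<^esub> (x [^]\<^bsub>free_grp A\<^esub> (Suc k))"
    by (simp only: int_pow_def2 if_P[OF True] k)
  ultimately have "x [^]\<^bsub>free_grp A\<^esub> m = inv_word (x [^]\<^bsub>free_grp A\<^esub> (Suc k))"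
    by (simp only: inv_free_grp)
  then show ?thesis using free_grp_nat_pow_neq_one[OF x, of k] inv_word_eq_Nil_iff by metis
next
  case False
  then obtain k where k: "nat m = Suc k"
    using assms(3) by (metis gr0_implies_Suc linorder_neqE_linordered_idom zero_less_nat_eq)
  then have "x [^]\<^bsub>free_grp A\<^esub> m = x [^]\<^bsub>free_grp A\<^esub> (Suc k)"
    using False by (simp only: int_pow_def2 k if_False)
  then show ?thesis using free_grp_nat_pow_neq_one[OF x, of k] by metis
qed

lemma take_eq_take_le: "take k x = take k y \<Longrightarrow> m \<le> k \<Longrightarrow> take m x = take m y"
  by (metis min.absorb1 take_take)

lemma take_take_append: "m \<le> k \<Longrightarrow> k \<le> length h \<Longrightarrow> take m (take k h @ xs) = take m h"
  by (simp add: min_def)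

lemma take_drop_take_append:
  "s + m \<le> k \<Longrightarrow> k \<le> length h \<Longrightarrow> take m (drop s (take k h @ xs)) = take m (drop s h)"
  by (simp add: min_def take_drop)

section \<open>Small cancellation: pieces with unique windows\<close>

locale window_size =
  fixes l n :: nat
  assumes window_pos: "1 \<le> l" and window_le: "8 * l \<le> n"

text \<open>P is the set of generators of a subgroup together with their inverses; no window of
  length l occurs twice in them.\<close>

locale unique_windows = window_size l n for l n :: nat +
  fixes P :: "'a letter list set"
  assumes pieces_reduced: "w \<in> P \<Longrightarrow> reduced w"
    and pieces_inv_word: "w \<in> P \<Longrightarrow> inv_word w \<in> P"
    and pieces_length: "w \<in> P \<Longrightarrow> n - l \<le> length w"
    and windows_unique: "\<And>w1 w2 p1 p2. w1 \<in> P \<Longrightarrow> w2 \<in> P \<Longrightarrow>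
        p1 + l \<le> length w1 \<Longrightarrow> p2 + l \<le> length w2 \<Longrightarrow>
        take l (drop p1 w1) = take l (drop p2 w2) \<Longrightarrow> w1 = w2 \<and> p1 = p2"
begin

lemma pieces_length_ge: "w \<in> P \<Longrightarrow> 7 * l \<le> length w"
  using pieces_length window_le by fastforce

lemma take_window_neq_inv_word: "w \<in> P \<Longrightarrow> take l w \<noteq> take l (inv_word w)"
proof
  assume w: "w \<in> P" and e: "take l w = take l (inv_word w)"
  have "w = inv_word w"
    using windows_unique[OF w pieces_inv_word[OF w], of 0 0] e pieces_length_ge[OF w] by simp
  moreover have "w \<noteq> []" using pieces_length_ge[OF w] window_pos by auto
  ultimately show False using inv_word_neq_self pieces_reduced[OF w] by metis
qed

definition framed :: "'a letter list \<Rightarrow> 'a letter list \<Rightarrow> 'a letter list \<Rightarrow> bool" where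
  "framed h a b \<longleftrightarrow> a \<in> P \<and> b \<in> P \<and> reduced h \<and>
     length a - l \<le> length h \<and> take (length a - l) h = take (length a - l) a \<and>
     length b - l \<le> length h \<and> drop (length h - (length b - l)) h = drop l b \<and>
     ((h = a \<and> b = a) \<or> length a + length b \<le> length h + 2 * l)"

lemma framed_take:
  assumes "framed h a b" "m \<le> length a - l"
  shows "take m h = take m a"
  using assms take_eq_take_le unfolding framed_def by blast

lemma framed_window:
  assumes "framed h a b" "s + l \<le> length a - l"
  shows "take l (drop s h) = take l (drop s a)"
  using framed_take[OF assms] by (simp add: take_drop add.commute)

lemma framed_inv_word:
  assumes "framed h a b"
  shows "framed (inv_word h) (inv_word b) (inv_word a)"
proof -
  have a: "a \<in> P" and b: "b \<in> P" using assms by (auto simp: framed_def)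
  have la: "7 * l \<le> length a" and lb: "7 * l \<le> length b" using pieces_length_ge a b by auto
  have t1: "take (length b - l) (inv_word h) = take (length b - l) (inv_word b)"
    using assms lb by (simp add: framed_def take_inv_word)
  have la': "length a - l \<le> length h" using assms by (simp add: framed_def)
  have t2: "drop (length h - (length a - l)) (inv_word h) = drop l (inv_word a)"
  proof -
    have "drop (length h - (length a - l)) (inv_word h)
        = inv_word (take (length h - (length h - (length a - l))) h)"
      by (simp add: drop_inv_word)
    also have "length h - (length h - (length a - l)) = length a - l" using la' by simp
    finally show ?thesis using assms by (simp add: framed_def drop_inv_word)
  qed
  show ?thesis using assms t1 t2 pieces_inv_word a b by (auto simp: framed_def)
qed

text \<open>Holds for a conjugator of minimal length: otherwise multiplying by a piece shortens it.\<close>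

definition half_overlapping :: "'a letter list \<Rightarrow> bool" where
  "half_overlapping g \<longleftrightarrow>
     (\<forall>w\<in>P. \<forall>j. j \<le> length g \<longrightarrow> j \<le> length w \<longrightarrow> take j g = take j w \<longrightarrow> 2 * j \<le> length w)"

lemma half_overlapping_framed:
  assumes "half_overlapping g" "w \<in> P" "take j g = take j x" "j \<le> length g" "j \<le> length x"
    "length w - l \<le> length x" "take (length w - l) x = take (length w - l) w"
  shows "2 * j \<le> length w"
proof -
  define j' where "j' = min j (length w - l)"
  have "take j' g = take j' x" using assms(3) by (metis j'_def min.cobounded1 take_take min_def)
  also have "\<dots> = take j' w" using assms(7) by (metis j'_def min.cobounded2 take_take min_def)
  finally have "take j' g = take j' w" .
  moreover have "j' \<le> length g" "j' \<le> length w" using assms j'_def by auto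
  ultimately have "2 * j' \<le> length w" using assms(1,2) by (auto simp: half_overlapping_def)
  moreover have "7 * l \<le> length w" using pieces_length_ge assms(2) by auto
  ultimately show ?thesis using window_pos j'_def by (auto simp: min_def split: if_splits)
qed


lemma conjugation_cancellation_bounds:
  assumes ph: "framed h a b" and rg: "reduced g" and mg: "half_overlapping g"
    and c: "c \<le> length h" "c \<le> length g" "take c g = take c (inv_word h)"
       "W = take (length h - c) h @ drop c g"
    and d: "d \<le> length g" "d \<le> length v" "take d v = take d (inv_word g)"
       "W = take (length g - d) g @ drop d v"
  shows "2 * c \<le> length b \<and> length g - d < length h - c \<and> 2 * (length g - d) \<le> length a"
proof -
  have a: "a \<in> P" and b: "b \<in> P" using ph by (auto simp: framed_def)
  have la: "7 * l \<le> length a" and lb: "7 * l \<le> length b" using pieces_length_ge a b by auto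
  have pih: "framed (inv_word h) (inv_word b) (inv_word a)" using framed_inv_word[OF ph] .
  have c2: "2 * c \<le> length b"
    using half_overlapping_framed[OF mg pieces_inv_word[OF b] c(3)] c pih by (auto simp: framed_def)
  define s where "s = length g - d"
  define p where "p = length h - c"
  define j0 where "j0 = min s p"
  have "take j0 W = take j0 h"
    using c(4) c(1) take_take_append[of j0 p h] by (simp add: j0_def p_def)
  moreover have "take j0 W = take j0 g"
    using d(4) d(1) take_take_append[of j0 s g] by (simp add: j0_def s_def)
  ultimately have tj0: "take j0 g = take j0 h" by simp
  have j02: "2 * j0 \<le> length a"
    using half_overlapping_framed[OF mg a tj0] ph c(1) d(1)
    by (auto simp: framed_def j0_def s_def p_def)
  have "s < p"
  proof (rule ccontr)
    assume "\<not> s < p"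
    then have j0p: "j0 = p" by (simp add: j0_def)
    consider "h = a \<and> b = a" | "length a + length b \<le> length h + 2 * l"
      using ph by (auto simp: framed_def)
    then show False
    proof cases
      case 1
      then have cl: "l \<le> c" "l \<le> p" using j02 j0p c2 la p_def c(1) by auto
      have "take l g = take l a" using tj0 cl 1 j0p take_eq_take_le by blast
      moreover have "take l g = take l (inv_word a)" using c(3) cl 1 take_eq_take_le by blast
      ultimately show False using take_window_neq_inv_word[OF a] by simp
    next
      case 2
      have "p + c = length h" using p_def c(1) by simp
      then show False using 2 j02 j0p c2 la lb window_pos by linarith
    qed
  qed
  then show ?thesis using c2 j02 by (simp add: j0_def s_def p_def)
qed

lemma conjugation_cancellation_bound_right:
  assumes pv: "framed v a' b'" and rg: "reduced g" and mg': "half_overlapping (inv_word g)"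
    and c: "c \<le> length h" "c \<le> length g" "take c g = take c (inv_word h)"
       "W = take (length h - c) h @ drop c g"
    and d: "d \<le> length g" "d \<le> length v" "take d v = take d (inv_word g)"
       "W = take (length g - d) g @ drop d v"
  shows "2 * d \<le> length a'"
proof -
  have "inv_word W = take (length (inv_word v) - d) (inv_word v) @ drop d (inv_word g)"
    using d(1,2,4) by (simp add: take_inv_word drop_inv_word)
  moreover have "inv_word W = take (length (inv_word g) - c) (inv_word g) @ drop c (inv_word h)"
    using c(1,2,4) by (simp add: take_inv_word drop_inv_word)
  moreover have "take d (inv_word g) = take d (inv_word (inv_word v))" using d(3) by simp
  moreover have "take c (inv_word h) = take c (inv_word (inv_word g))" using c(3) by simp
  ultimately show ?thesis
    using conjugation_cancellation_bounds[OF framed_inv_word[OF pv] _ mg'] rg c(1,2) d(1,2)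
    by simp
qed

text \<open>If h g = g v with h, v framed and g half overlapping from both sides, then g is trivial:
  either a window of W lies in the common prefix of h and of v, which by uniqueness of windows
  forces g = u u\<inverse> with u a prefix of a piece, or h is a single piece that g starts with
  and cancels against at once, so that the first l letters of that piece read the same as
  those of its inverse.\<close>

lemma framed_conjugation_trivial:
  assumes ph: "framed h a b" and pv: "framed v a' b'" and rg: "reduced g"
    and mg: "half_overlapping g" and mg': "half_overlapping (inv_word g)"
    and e: "reduce (h @ g) = reduce (g @ v)"
  shows "g = []"
proof -
  have a: "a \<in> P" and b: "b \<in> P" and a': "a' \<in> P"
    using ph pv by (auto simp: framed_def)
  have la: "7 * l \<le> length a" and lb: "7 * l \<le> length b" and la': "7 * l \<le> length a'"
    using pieces_length_ge a b a' by auto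
  have rh: "reduced h" and rv: "reduced v" using ph pv by (auto simp: framed_def)
  obtain c where c: "c \<le> length h" "c \<le> length g" "take c g = take c (inv_word h)"
       "reduce (h @ g) = take (length h - c) h @ drop c g"
    by (rule reduce_append_cancellation[OF rh rg])
  obtain d where d: "d \<le> length g" "d \<le> length v" "take d v = take d (inv_word g)"
       "reduce (g @ v) = take (length g - d) g @ drop d v"
    by (rule reduce_append_cancellation[OF rg rv])
  define W where "W = reduce (h @ g)"
  have W1: "W = take (length h - c) h @ drop c g" using c W_def by simp
  have W2: "W = take (length g - d) g @ drop d v" using d e W_def by simp
  define s where "s = length g - d"
  define p where "p = length h - c"
  have m1: "2 * c \<le> length b" "s < p" "2 * s \<le> length a"
    using conjugation_cancellation_bounds[OF ph rg mg c(1-3) W1 d(1-3) W2] by (auto simp: s_def p_def)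
  have m2: "2 * d \<le> length a'"
    using conjugation_cancellation_bound_right[OF pv rg mg' c(1-3) W1 d(1-3) W2] .
  have tg: "take s g = take s h"
  proof -
    have "take s g = take s W" using W2 d(1) by (simp add: s_def)
    also have "\<dots> = take s h"
      using W1 m1(2) take_take_append[of s p h] by (simp add: p_def)
    finally show ?thesis .
  qed
  show ?thesis
  proof (cases "s + l \<le> p")
    case True
    have "take l (drop s a) = take l (drop s h)"
      using framed_window[OF ph] m1(3) la by simp
    also have "\<dots> = take l (drop s W)"
      using W1 True take_drop_take_append[of s l p h] by (simp add: p_def)
    also have "drop s W = drop d v" using W2 d(1) by (simp add: s_def)
    also have "take l (drop d v) = take l (drop d a')"
      using framed_window[OF pv] m2 la' by simp
    finally have "take l (drop s a) = take l (drop d a')" .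
    moreover have "s + l \<le> length a" "d + l \<le> length a'" using m1(3) m2 la la' by linarith+
    ultimately have aa: "a = a' \<and> s = d" using windows_unique[OF a a'] by blast
    have "take s g = take s a"
      using tg framed_take[OF ph, of s] m1(3) la by simp
    moreover have "inv_word (drop s g) = take s a"
      using d(1,3) framed_take[OF pv, of d] m2 la' aa by (simp add: s_def take_inv_word)
    ultimately have "g = take s a @ inv_word (take s a)"
      by (metis append_take_drop_id inv_word_inv_word)
    moreover from this have "take s a = []"
      using rg reduced_append_inv_word_imp_Nil by metis
    ultimately show ?thesis by simp
  next
    case False
    have ha: "h = a \<and> b = a"
      using ph False m1 la lb unfolding framed_def p_def by linarith
    have cl: "l \<le> c" "l \<le> s" using False m1 ha la c(1) by (simp_all add: p_def)
    have "take l g = take l a" using tg cl ha take_eq_take_le by blast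
    moreover have "take l g = take l (inv_word a)" using c(3) cl ha take_eq_take_le by blast
    ultimately show ?thesis using take_window_neq_inv_word[OF a] by simp
  qed
qed

end

section \<open>Subgroups generated by tuples with unique windows\<close>

definition inv_if :: "bool \<Rightarrow> 'a letter list \<Rightarrow> 'a letter list" where
  "inv_if b w = (if b then inv_word w else w)"

locale window_tuple = window_size l n for l n :: nat +
  fixes A :: "'a set" and hs :: "'a letter list list"
  assumes gens_carrier: "set hs \<subseteq> carrier (free_grp A)"
    and gens_length: "\<And>h. h \<in> set hs \<Longrightarrow> n - l \<le> length h"
    and gens_windows_unique: "\<And>i j p q s. i < length hs \<Longrightarrow> j < length hs \<Longrightarrow>
       p + l \<le> length (hs ! i) \<Longrightarrow> q + l \<le> length (hs ! j) \<Longrightarrow>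
       take l (drop p (hs ! i)) = inv_if s (take l (drop q (hs ! j))) \<Longrightarrow> i = j \<and> p = q \<and> \<not> s"
begin

text \<open>The letter (i, b) of the free group on the indices stands for the i-th generator,
  inverted if b holds.\<close>

definition gen_word :: "nat letter \<Rightarrow> 'a letter list" where
  "gen_word x = inv_if (snd x) (hs ! fst x)"

abbreviation gen_letters :: "nat letter set" where
  "gen_letters \<equiv> {..<length hs} \<times> UNIV"

lemma gen_word_inv_letter: "gen_word (inv_letter x) = inv_word (gen_word x)"
  by (simp add: gen_word_def inv_if_def inv_letter_def)

lemma gen_word_windows_unique:
  assumes "x \<in> gen_letters" "y \<in> gen_letters"
    "p + l \<le> length (gen_word x)" "q + l \<le> length (gen_word y)"
    "take l (drop p (gen_word x)) = take l (drop q (gen_word y))"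
  shows "x = y \<and> p = q"
proof -
  obtain i b where x: "x = (i, b)" by (cases x)
  obtain j c where y: "y = (j, c)" by (cases y)
  define p' where "p' = (if b then length (hs ! i) - p - l else p)"
  define q' where "q' = (if c then length (hs ! j) - q - l else q)"
  have wx: "take l (drop p (gen_word x)) = inv_if b (take l (drop p' (hs ! i)))"
    using assms(3) x by (auto simp: gen_word_def inv_if_def p'_def window_inv_word)
  have wy: "take l (drop q (gen_word y)) = inv_if c (take l (drop q' (hs ! j)))"
    using assms(4) y by (auto simp: gen_word_def inv_if_def q'_def window_inv_word)
  have "take l (drop p' (hs ! i)) = inv_if (b \<noteq> c) (take l (drop q' (hs ! j)))"
    using assms(5) wx wy
    by (cases b; cases c) (auto simp: inv_if_def inv_word_eq_iff dest: arg_cong[of _ _ inv_word])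
  moreover have "p' + l \<le> length (hs ! i)" "q' + l \<le> length (hs ! j)"
    using assms(3,4) x y by (auto simp: gen_word_def inv_if_def p'_def q'_def)
  ultimately have "i = j \<and> p' = q' \<and> b = c"
    using gens_windows_unique assms(1,2) x y by blast
  then show ?thesis
    using assms(3,4) x y by (auto simp: gen_word_def inv_if_def p'_def q'_def split: if_splits)
qed

lemma gen_word_in_carrier:
  assumes "x \<in> gen_letters"
  shows "gen_word x \<in> carrier (free_grp A)"
proof -
  have "hs ! fst x \<in> set hs" using assms by auto
  then have "hs ! fst x \<in> carrier (free_grp A)" using gens_carrier by blast
  then show ?thesis by (auto simp: gen_word_def inv_if_def)
qed

lemma reduced_gen_word: "x \<in> gen_letters \<Longrightarrow> reduced (gen_word x)"
  using gen_word_in_carrier by simp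

sublocale unique_windows l n "gen_word ` gen_letters"
proof
  fix w assume "w \<in> gen_word ` gen_letters"
  then obtain x where x: "x \<in> gen_letters" "w = gen_word x" by auto
  then show "reduced w" using reduced_gen_word by simp
  show "inv_word w \<in> gen_word ` gen_letters"
    using x gen_word_inv_letter[of x] by (intro image_eqI[of _ _ "inv_letter x"]) (auto simp: inv_letter_def)
  show "n - l \<le> length w" using x gens_length by (auto simp: gen_word_def inv_if_def)
next
  fix w1 w2 p1 p2
  assume "w1 \<in> gen_word ` gen_letters" "w2 \<in> gen_word ` gen_letters"
    "p1 + l \<le> length w1" "p2 + l \<le> length w2" "take l (drop p1 w1) = take l (drop p2 w2)"
  then show "w1 = w2 \<and> p1 = p2" using gen_word_windows_unique by blast
qed


fun eval_word :: "nat letter list \<Rightarrow> 'a letter list" where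
  "eval_word [] = []"
| "eval_word (x # U) = reduce (gen_word x @ eval_word U)"

lemma reduced_eval_word: "reduced (eval_word U)"
  by (cases U) auto

lemma eval_word_append: "eval_word (U @ V) = reduce (eval_word U @ eval_word V)"
  by (induction U) (auto simp: reduce_reduced reduced_eval_word)

lemma eval_word_reduce: "eval_word (reduce U) = eval_word U"
proof (induction U)
  case (Cons x U)
  show ?case
  proof (cases "reduce U")
    case (Cons y r)
    show ?thesis
    proof (cases "y = inv_letter x")
      case True
      have "eval_word (x # U) = reduce (gen_word x @ eval_word (y # r))"
        using Cons.IH Cons by simp
      also have "\<dots> = reduce (gen_word x @ inv_word (gen_word x) @ eval_word r)"
        using True by (simp add: gen_word_inv_letter)
      also have "\<dots> = eval_word r"
        by (simp add: reduce_append_inv_word_append reduce_reduced reduced_eval_word)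
      finally show ?thesis using Cons True by (simp add: reduce_Cons_eq cons_reduce_def del: reduce.simps(2))
    qed (use Cons.IH Cons in \<open>simp add: reduce_Cons_eq cons_reduce_def del: reduce.simps(2)\<close>)
  qed (use Cons.IH in \<open>simp add: cons_reduce_def reduce_Cons_eq del: reduce.simps(2)\<close>)
qed simp

abbreviation H :: "'a letter list set" where
  "H \<equiv> generate (free_grp A) (set hs)"

lemma subgroup_H: "subgroup H (free_grp A)"
  using group.generate_is_subgroup[OF group_free_grp gens_carrier] .

lemma H_in_carrier: "h \<in> H \<Longrightarrow> h \<in> carrier (free_grp A)"
  using subgroup.subset[OF subgroup_H] by (rule subsetD)

lemma H_reduce_append: "a \<in> H \<Longrightarrow> b \<in> H \<Longrightarrow> reduce (a @ b) \<in> H"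
  using subgroup.m_closed[OF subgroup_H, of a b] by simp

lemma H_inv_word: "a \<in> H \<Longrightarrow> inv_word a \<in> H"
  using subgroup.m_inv_closed[OF subgroup_H] inv_free_grp H_in_carrier by metis

lemma Nil_in_H: "[] \<in> H"
  using subgroup.one_closed[OF subgroup_H] by simp

lemma gen_word_in_H: "x \<in> gen_letters \<Longrightarrow> gen_word x \<in> H"
  using generate.incl[of "hs ! fst x" "set hs" "free_grp A"] H_inv_word
  by (auto simp: gen_word_def inv_if_def)

lemma H_eq_eval_word:
  assumes "h \<in> H"
  obtains U where "set U \<subseteq> gen_letters" "reduced U" "h = eval_word U"
proof -
  have "\<exists>U. set U \<subseteq> gen_letters \<and> h = eval_word U"
    using assms
  proof (induction rule: generate.induct)
    case one
    then show ?case by (intro exI[of _ "[]"]) simp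
  next
    case (incl h)
    then obtain i where i: "i < length hs" "h = hs ! i" by (metis in_set_conv_nth)
    then show ?case
      using reduced_gen_word[of "(i, False)"] gen_word_in_carrier[of "(i, False)"]
      by (intro exI[of _ "[(i, False)]"]) (auto simp: gen_word_def inv_if_def reduce_reduced)
  next
    case (inv h)
    then obtain i where i: "i < length hs" "h = hs ! i" by (metis in_set_conv_nth)
    then show ?case
      using gen_word_in_carrier[of "(i, True)"] inv_free_grp gens_carrier inv
      by (intro exI[of _ "[(i, True)]"]) (auto simp: gen_word_def inv_if_def reduce_reduced)
  next
    case (eng h1 h2)
    then obtain U V where "set U \<subseteq> gen_letters" "h1 = eval_word U"
      and "set V \<subseteq> gen_letters" "h2 = eval_word V" by blast
    then show ?case
      using set_reduce_subset[of "U @ V"]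
      by (intro exI[of _ "reduce (U @ V)"]) (auto simp: eval_word_reduce eval_word_append)
  qed
  then obtain U where "set U \<subseteq> gen_letters" "h = eval_word U" by blast
  then show ?thesis
    using that[of "reduce U"] set_reduce_subset[of U] eval_word_reduce[of U] by auto
qed

text \<open>Adjacent factors of a reduced product of generators cancel fewer than l letters, since
  otherwise a piece and the inverse of another one would share their first l letters.\<close>

lemma gen_word_cancellation_lt:
  assumes x: "x \<in> gen_letters" and y: "y \<in> gen_letters" "y \<noteq> inv_letter x"
    and r: "framed r (gen_word y) b" and c: "take c r = take c (inv_word (gen_word x))"
  shows "c < l"
proof (rule ccontr)
  assume "\<not> c < l"
  have xi: "inv_letter x \<in> gen_letters" using x by (auto simp: inv_letter_def)
  have "take l r = take l (inv_word (gen_word x))"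
    using c \<open>\<not> c < l\<close> take_eq_take_le by (metis not_less)
  moreover have "take l r = take l (gen_word y)"
    using framed_take[OF r, of l] pieces_length_ge[of "gen_word y"] y(1) window_pos by simp
  ultimately have "take l (drop 0 (gen_word y)) = take l (drop 0 (gen_word (inv_letter x)))"
    by (simp add: gen_word_inv_letter)
  moreover have "0 + l \<le> length (gen_word y)" "0 + l \<le> length (gen_word (inv_letter x))"
    using pieces_length_ge[OF imageI[OF y(1)]] pieces_length_ge[OF imageI[OF xi]] by auto
  ultimately have "y = inv_letter x" using gen_word_windows_unique[OF y(1) xi] by blast
  then show False using y(2) by simp
qed

lemma framed_reduce_gen_word_append:
  assumes x: "x \<in> gen_letters" and y: "y \<in> gen_letters" "y \<noteq> inv_letter x"
    and r: "framed r (gen_word y) b"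
  shows "framed (reduce (gen_word x @ r)) (gen_word x) b"
    and "length (gen_word x) + length b \<le> length (reduce (gen_word x @ r)) + 2 * l"
proof -
  let ?a = "gen_word x"
  have lx: "7 * l \<le> length ?a" and ly: "7 * l \<le> length (gen_word y)"
    using pieces_length_ge x y by auto
  have bP: "b \<in> gen_word ` gen_letters" and lb: "7 * l \<le> length b"
    using r pieces_length_ge by (auto simp: framed_def)
  have rr: "reduced r" using r by (simp add: framed_def)
  obtain c where c: "c \<le> length ?a" "c \<le> length r" "take c r = take c (inv_word ?a)"
      "reduce (?a @ r) = take (length ?a - c) ?a @ drop c r"
    by (rule reduce_append_cancellation[OF reduced_gen_word[OF x] rr])
  have cl: "c < l" by (rule gen_word_cancellation_lt[OF x y r c(3)])
  have lr: "length b - l + c \<le> length r" "length b \<le> length r"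
    using r cl lb ly by (auto simp: framed_def)
  define h' where "h' = reduce (?a @ r)"
  have h'e: "h' = take (length ?a - c) ?a @ drop c r" using c(4) h'_def by simp
  have lh': "length h' = length ?a - c + (length r - c)" using h'e c by simp
  have "take (length ?a - l) h' = take (length ?a - l) ?a"
    using h'e take_take_append[of "length ?a - l" "length ?a - c" ?a "drop c r"] cl c(1) by simp
  moreover have "drop (length h' - (length b - l)) h' = drop l b"
  proof -
    have "drop (length h' - (length b - l)) h' = drop (length r - (length b - l)) r"
      using h'e lr by (simp add: add.commute)
    also have "\<dots> = drop l b" using r by (simp add: framed_def)
    finally show ?thesis .
  qed
  moreover show "length ?a + length b \<le> length (reduce (?a @ r)) + 2 * l"
    using lh' lr cl c(1,2) unfolding h'_def[symmetric] by linarith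
  ultimately show "framed (reduce (?a @ r)) ?a b"
    using x bP lh' lr cl unfolding framed_def h'_def by auto
qed

lemma framed_eval_word:
  assumes "U \<noteq> []" "reduced U" "set U \<subseteq> gen_letters"
  shows "framed (eval_word U) (gen_word (hd U)) (gen_word (last U)) \<and>
    (2 \<le> length U \<longrightarrow>
      length (gen_word (hd U)) + length (gen_word (last U)) \<le> length (eval_word U) + 2 * l)"
  using assms
proof (induction U rule: list_nonempty_induct)
  case (single x)
  then have "x \<in> gen_letters" by simp
  moreover have "7 * l \<le> length (gen_word x)"
    using pieces_length_ge[OF imageI] \<open>x \<in> gen_letters\<close> by blast
  ultimately have "reduced (gen_word x)" "l \<le> length (gen_word x)"
    using reduced_gen_word by auto
  then show ?case using \<open>x \<in> gen_letters\<close> by (auto simp: framed_def reduce_reduced)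
next
  case (cons x U)
  have "hd U \<in> gen_letters" "hd U \<noteq> inv_letter x" "x \<in> gen_letters"
    using cons.hyps cons.prems by (auto simp: reduced_Cons)
  moreover have "framed (eval_word U) (gen_word (hd U)) (gen_word (last U))"
    using cons.IH cons.prems by (simp add: reduced_Cons)
  ultimately show ?case using framed_reduce_gen_word_append cons.hyps by auto
qed

lemma framed_if_in_H:
  assumes "h \<in> H" "h \<noteq> []"
  obtains a b where "framed h a b"
proof -
  obtain U where U: "set U \<subseteq> gen_letters" "reduced U" "h = eval_word U"
    using H_eq_eval_word[OF assms(1)] .
  then have "U \<noteq> []" using assms(2) by auto
  then show ?thesis using framed_eval_word[OF _ U(2,1)] U(3) that by blast
qed

text \<open>A product of two or more generators has length greater than n.\<close>

lemma short_elements_H: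
  assumes "h \<in> H" "length h \<le> n"
  shows "h = [] \<or> h \<in> gen_word ` gen_letters"
proof -
  obtain U where U: "set U \<subseteq> gen_letters" "reduced U" "h = eval_word U"
    using H_eq_eval_word[OF assms(1)] .
  consider "U = []" | x where "U = [x]" | "2 \<le> length U"
    by (metis One_nat_def Suc_1 length_0_conv length_Suc_conv less_2_cases not_less)
  then show ?thesis
  proof cases
    case (2 x)
    then show ?thesis using U reduced_gen_word[of x] by (simp add: reduce_reduced)
  next
    case 3
    then have "U \<noteq> []" by auto
    have "length (gen_word (hd U)) + length (gen_word (last U)) \<le> length h + 2 * l"
      using framed_eval_word[OF \<open>U \<noteq> []\<close> U(2,1)] 3 U(3) by simp
    moreover have "7 * l \<le> length (gen_word (hd U))" "n - l \<le> length (gen_word (last U))"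
      using framed_eval_word[OF \<open>U \<noteq> []\<close> U(2,1)] pieces_length_ge pieces_length
      by (auto simp: framed_def)
    ultimately show ?thesis using assms(2) window_pos window_le by linarith
  qed (use U in simp)
qed

lemma card_short_elements_H: "card {h \<in> H. h \<noteq> [] \<and> length h \<le> n} \<le> 2 * length hs"
proof -
  have "card {h \<in> H. h \<noteq> [] \<and> length h \<le> n} \<le> card (gen_word ` gen_letters)"
    using short_elements_H by (intro card_mono) auto
  also have "\<dots> \<le> card gen_letters" by (rule card_image_le) simp
  also have "card gen_letters = 2 * length hs" by (simp add: card_cartesian_product)
  finally show ?thesis .
qed

text \<open>For a minimal conjugator g, which lies outside H by assumption, multiplying by a piece
  sharing more than half of its length with g would give a shorter conjugator.\<close>

lemma half_overlapping_minimal_conjugator: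
  assumes g: "g \<in> carrier (free_grp A)" "g \<notin> H" and h: "h \<in> H" "h \<noteq> []"
    and v: "reduce (inv_word g @ h @ g) \<in> H"
    and minimal: "\<And>g' h'. length g' < length g \<Longrightarrow> g' \<in> carrier (free_grp A) \<Longrightarrow>
      h' \<in> H \<Longrightarrow> h' \<noteq> [] \<Longrightarrow> reduce (inv_word g' @ h' @ g') \<in> H \<Longrightarrow> g' \<in> H"
  shows "half_overlapping g"
  unfolding half_overlapping_def
proof (intro ballI allI impI)
  fix w j assume w: "w \<in> gen_word ` gen_letters"
    and j: "j \<le> length g" "j \<le> length w" "take j g = take j w"
  show "2 * j \<le> length w"
  proof (rule ccontr)
    assume "\<not> 2 * j \<le> length w"
    have wH: "w \<in> H" using w gen_word_in_H by auto
    define g' where "g' = reduce (inv_word w @ g)"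
    have "g' = reduce (inv_word (drop j w) @ inv_word (take j w) @ take j w @ drop j g)"
      using j(3) by (metis append_assoc append_take_drop_id inv_word_append g'_def)
    then have "length g' \<le> length (inv_word (drop j w) @ drop j g)"
      using length_reduce_le by (metis reduce_cancel_middle')
    then have lg': "length g' < length g" using j \<open>\<not> 2 * j \<le> length w\<close> by simp
    have g'c: "g' \<in> carrier (free_grp A)"
      unfolding g'_def by (rule reduce_append_in_carrier[OF H_in_carrier[OF H_inv_word[OF wH]] g(1)])
    define h' where "h' = reduce (inv_word w @ h @ w)"
    have "h' \<in> H" unfolding h'_def
      using H_reduce_append[OF H_reduce_append[OF H_inv_word[OF wH] h(1)] wH] by simp
    moreover have "h' \<noteq> []"
    proof
      assume "h' = []"
      then have "reduce (w @ h' @ inv_word w) = []" by simp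
      then show False
        using h H_in_carrier[OF h(1)] by (simp add: h'_def reduce_append_inv_word_append reduce_reduced)
    qed
    moreover have "reduce (inv_word g' @ h' @ g')
        = reduce (inv_word g @ (w @ inv_word w) @ h @ (w @ inv_word w) @ g)"
      by (simp add: g'_def h'_def) (metis append_assoc reduce_append_reduce_right)
    then have "reduce (inv_word g' @ h' @ g') = reduce (inv_word g @ h @ g)"
      by (metis append_assoc reduce_cancel_middle)
    ultimately have "g' \<in> H" using minimal[OF lg' g'c] v by simp
    then have "reduce (w @ g') \<in> H" using H_reduce_append wH by blast
    moreover have "reduce (w @ g') = g"
      using g(1) by (simp add: g'_def reduce_append_inv_word_append reduce_reduced)
    ultimately show False using g(2) by simp
  qed
qed

lemma half_overlapping_inv_minimal_conjugator:
  assumes g: "g \<in> carrier (free_grp A)" "g \<notin> H" and h: "h \<in> H" "h \<noteq> []"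
    and v: "reduce (inv_word g @ h @ g) \<in> H"
    and minimal: "\<And>g' h'. length g' < length g \<Longrightarrow> g' \<in> carrier (free_grp A) \<Longrightarrow>
      h' \<in> H \<Longrightarrow> h' \<noteq> [] \<Longrightarrow> reduce (inv_word g' @ h' @ g') \<in> H \<Longrightarrow> g' \<in> H"
  shows "half_overlapping (inv_word g)"
  unfolding half_overlapping_def
proof (intro ballI allI impI)
  fix w j assume w: "w \<in> gen_word ` gen_letters"
    and j: "j \<le> length (inv_word g)" "j \<le> length w" "take j (inv_word g) = take j w"
  show "2 * j \<le> length w"
  proof (rule ccontr)
    assume "\<not> 2 * j \<le> length w"
    have wH: "w \<in> H" using w gen_word_in_H by auto
    define g' where "g' = reduce (g @ w)"
    have "drop (length g - j) g = inv_word (take j w)"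
      using j(3) j(1) by (metis inv_word_inv_word take_inv_word)
    then have "g' = reduce (take (length g - j) g @ inv_word (take j w) @ take j w @ drop j w)"
      by (metis append_assoc append_take_drop_id g'_def)
    then have "length g' \<le> length (take (length g - j) g @ drop j w)"
      using length_reduce_le by (metis reduce_cancel_middle')
    then have lg': "length g' < length g" using j \<open>\<not> 2 * j \<le> length w\<close> by simp
    have g'c: "g' \<in> carrier (free_grp A)"
      unfolding g'_def by (rule reduce_append_in_carrier[OF g(1) H_in_carrier[OF wH]])
    have "reduce (inv_word g' @ h @ g') = reduce (inv_word w @ reduce (inv_word g @ h @ g) @ w)"
      by (simp add: g'_def) (metis append_assoc reduce_append_reduce_right)
    moreover have "reduce (inv_word w @ reduce (inv_word g @ h @ g) @ w) \<in> H"
      using H_reduce_append[OF H_reduce_append[OF H_inv_word[OF wH] v] wH] by simp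
    ultimately have "g' \<in> H" using minimal[OF lg' g'c h] by simp
    then have "reduce (g' @ inv_word w) \<in> H" using H_reduce_append H_inv_word wH by blast
    moreover have "reduce (g' @ inv_word w) = g"
      using g(1) by (simp add: g'_def reduce_reduced)
    ultimately show False using g(2) by simp
  qed
qed

lemma conjugate_in_H_imp_in_H:
  "g \<in> carrier (free_grp A) \<Longrightarrow> h \<in> H \<Longrightarrow> h \<noteq> [] \<Longrightarrow> reduce (inv_word g @ h @ g) \<in> H \<Longrightarrow> g \<in> H"
proof (induction "length g" arbitrary: g h rule: less_induct)
  case less
  note g = less.prems(1) and h = less.prems(2,3) and v = less.prems(4)
  show "g \<in> H"
  proof (rule ccontr)
    assume gH: "g \<notin> H"
    have m1: "half_overlapping g"
      using half_overlapping_minimal_conjugator[OF g gH h v] less.hyps by blast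
    have m2: "half_overlapping (inv_word g)"
      using half_overlapping_inv_minimal_conjugator[OF g gH h v] less.hyps by blast
    define v where "v = reduce (inv_word g @ h @ g)"
    have "reduce (g @ v @ inv_word g) = h"
      using H_in_carrier[OF h(1)] by (simp add: v_def reduce_append_inv_word_append reduce_reduced)
    then have "v \<noteq> []" using h(2) by auto
    then obtain a' b' where pv: "framed v a' b'"
      using framed_if_in_H less.prems(4) v_def by blast
    obtain a b where ph: "framed h a b" using framed_if_in_H[OF h] .
    have "reduce (h @ g) = reduce (g @ v)"
      by (simp add: v_def reduce_append_inv_word_append)
    then have "g = []" using framed_conjugation_trivial[OF ph pv _ m1 m2] g by simp
    then show False using gH Nil_in_H by simp
  qed
qed

theorem malnormal_H: "malnormal (free_grp A) H"
  unfolding malnormal_def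
proof (intro ballI)
  fix g assume g: "g \<in> carrier (free_grp A) - H"
  have "reduce (inv_word g @ h @ g) = []" if "h \<in> H" "reduce (inv_word g @ h @ g) \<in> H" for h
  proof (cases "h = []")
    case False
    then show ?thesis using conjugate_in_H_imp_in_H that g by blast
  qed (simp add: reduce_inv_word_append_append)
  moreover have "reduce (inv_word g @ [] @ g) = []" by (simp add: reduce_inv_word_append_append)
  ultimately show "{inv\<^bsub>free_grp A\<^esub> g \<otimes>\<^bsub>free_grp A\<^esub> h \<otimes>\<^bsub>free_grp A\<^esub> g |h. h \<in> H} \<inter> H
      = {\<one>\<^bsub>free_grp A\<^esub>}"
    using g inv_free_grp[of g A] Nil_in_H by (auto simp: reduce_reduced) force+
qed

text \<open>x commutes with its power y = x^m, so y = x\<inverse> y x, and malnormality applies.\<close>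

theorem pure_H: "pure (free_grp A) H"
  unfolding pure_def
proof (intro ballI allI impI)
  fix x and m :: int
  assume x: "x \<in> carrier (free_grp A)" and m: "m \<noteq> 0 \<and> x [^]\<^bsub>free_grp A\<^esub> m \<in> H"
  show "x \<in> H"
  proof (cases "x = []")
    case False
    define y where "y = x [^]\<^bsub>free_grp A\<^esub> m"
    have y: "y \<in> H" "y \<noteq> []" using free_grp_int_pow_neq_one[OF x False] m y_def by auto
    have "reduce (y @ x) = x [^]\<^bsub>free_grp A\<^esub> (m + 1)"
      using group.int_pow_mult[OF group_free_grp x, of m 1] group.int_pow_1[OF group_free_grp x] y_def
      by simp
    moreover have "reduce (x @ y) = x [^]\<^bsub>free_grp A\<^esub> (1 + m)"
      using group.int_pow_mult[OF group_free_grp x, of 1 m] group.int_pow_1[OF group_free_grp x] y_def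
      by simp
    ultimately have "reduce (y @ x) = reduce (x @ y)" by (simp add: add.commute)
    then have "reduce (inv_word x @ y @ x) = reduce (inv_word x @ x @ y)"
      by (metis reduce_append_reduce_right)
    also have "\<dots> = y"
      using H_in_carrier[OF y(1)] by (simp add: reduce_inv_word_append_append reduce_reduced)
    finally have "reduce (inv_word x @ y @ x) = y" .
    then show ?thesis using conjugate_in_H_imp_in_H[OF x y(1,2)] y(1) by simp
  qed (simp add: Nil_in_H)
qed

end

section \<open>Counting reduced words\<close>

definition red_eq :: "'a set \<Rightarrow> nat \<Rightarrow> 'a letter list set" where
  "red_eq A L = {w \<in> carrier (free_grp A). length w = L}"

lemma determined_block_inj_on:
  assumes "\<forall>x\<in>S. length x = L \<and> (\<forall>t<m. x ! (b + t) = F t (take (b + t) x))"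
    and "b + m \<le> L"
  shows "inj_on (\<lambda>x. (take b x, drop (b + m) x)) S"
proof (rule inj_onI)
  fix x y assume x: "x \<in> S" and y: "y \<in> S"
    and e: "(take b x, drop (b + m) x) = (take b y, drop (b + m) y)"
  have lx: "length x = L" and ly: "length y = L" using assms x y by auto
  have "\<forall>u<L. x ! u = y ! u"
  proof (intro allI impI)
    fix u show "u < L \<Longrightarrow> x ! u = y ! u"
    proof (induction u rule: less_induct)
      case (less u)
      show ?case
      proof (cases "u < b")
        case True
        then show ?thesis using e by (metis nth_take prod.inject)
      next
        case False
        show ?thesis
        proof (cases "u < b + m")
          case True
          define t where "t = u - b"
          have ut: "u = b + t" "t < m" using False True t_def by auto
          have "take u x = take u y"
            using less lx ly by (intro nth_equalityI) auto
          then show ?thesis using assms x y ut by auto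
        next
          case False
          have "drop (b + m) x ! (u - (b + m)) = drop (b + m) y ! (u - (b + m))" using e by simp
          then show ?thesis using False less.prems lx ly assms(2) by simp
        qed
      qed
    qed
  qed
  then show "x = y" using lx ly by (intro nth_equalityI) auto
qed

lemma nth_window: "t < l \<Longrightarrow> p + l \<le> length x \<Longrightarrow> take l (drop p x) ! t = x ! (p + t)"
  by simp

locale finite_alphabet =
  fixes A :: "'a set"
  assumes finite_A: "finite A" and card_A_ge_2: "2 \<le> card A"
begin

abbreviation letters :: "'a letter set" where
  "letters \<equiv> A \<times> UNIV"

lemma card_letters: "card letters = 2 * card A"
  by (simp add: card_cartesian_product)

lemma finite_letters: "finite letters" using finite_A by simp

lemma red_eq_subset: "red_eq A L \<subseteq> {xs. set xs \<subseteq> letters \<and> length xs = L}"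
  by (auto simp: red_eq_def)

lemma finite_red_eq: "finite (red_eq A L)"
  using finite_subset[OF red_eq_subset finite_lists_length_eq[OF finite_letters]] .

lemma finite_red_le: "finite (red_le A n)"
proof -
  have "red_le A n \<subseteq> {xs. set xs \<subseteq> letters \<and> length xs \<le> n}" by (auto simp: red_le_def)
  then show ?thesis using finite_subset finite_lists_length_le[OF finite_letters] by blast
qed

lemma red_eq_0: "red_eq A 0 = {[]}" by (auto simp: red_eq_def)

lemma bij_betw_red_eq_Suc:
  "bij_betw (\<lambda>(w, x). w @ [x])
    (SIGMA w:red_eq A L. {x \<in> letters. w \<noteq> [] \<longrightarrow> x \<noteq> inv_letter (last w)}) (red_eq A (Suc L))"
proof (rule bij_betwI')
  fix p assume "p \<in> (SIGMA w:red_eq A L. {x \<in> letters. w \<noteq> [] \<longrightarrow> x \<noteq> inv_letter (last w)})"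
  then show "(\<lambda>(w, x). w @ [x]) p \<in> red_eq A (Suc L)"
    by (auto simp: red_eq_def reduced_append)
next
  fix v assume v: "v \<in> red_eq A (Suc L)"
  then have "v \<noteq> []" by (auto simp: red_eq_def)
  then have v': "v = butlast v @ [last v]" by simp
  then have "reduced (butlast v @ [last v])" using v by (simp add: red_eq_def)
  moreover have "last v \<in> letters"
    using v \<open>v \<noteq> []\<close> last_in_set[of v] by (auto simp: red_eq_def mem_Times_iff image_subset_iff)
  ultimately show "\<exists>p\<in>(SIGMA w:red_eq A L. {x \<in> letters. w \<noteq> [] \<longrightarrow> x \<noteq> inv_letter (last w)}).
      v = (\<lambda>(w, x). w @ [x]) p"
    using v v' unfolding reduced_append
    by (intro bexI[of _ "(butlast v, last v)"]) (auto simp: red_eq_def dest: in_set_butlastD)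
qed auto

lemma card_red_eq_Suc:
  "card (red_eq A (Suc L)) = (if L = 0 then 2 * card A else (2 * card A - 1) * card (red_eq A L))"
proof -
  define B where "B w = {x \<in> letters. w \<noteq> [] \<longrightarrow> x \<noteq> inv_letter (last w)}" for w
  have "card (red_eq A (Suc L)) = card (SIGMA w:red_eq A L. B w)"
    using bij_betw_same_card[OF bij_betw_red_eq_Suc] by (simp add: B_def)
  also have "\<dots> = (\<Sum>w\<in>red_eq A L. card (B w))"
    using finite_red_eq finite_letters by (intro card_SigmaI) (auto simp: B_def)
  finally have e: "card (red_eq A (Suc L)) = (\<Sum>w\<in>red_eq A L. card (B w))" .
  have "card (B w) = 2 * card A - 1" if w: "w \<in> red_eq A L" "L \<noteq> 0" for w
  proof -
    have "w \<noteq> []" using w by (auto simp: red_eq_def)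
    then have "inv_letter (last w) \<in> letters" "B w = letters - {inv_letter (last w)}"
      using w by (auto simp: red_eq_def inv_letter_def B_def)
    then show ?thesis using finite_letters card_letters by simp
  qed
  then show ?thesis using e by (auto simp: red_eq_0 B_def card_letters)
qed

abbreviation N :: "nat \<Rightarrow> nat" where
  "N L \<equiv> card (red_eq A L)"

definition growth :: real where
  "growth = real (2 * card A - 1)"

definition kappa :: real where
  "kappa = real (2 * card A) / growth"

lemma growth_ge_3: "3 \<le> growth" using card_A_ge_2 by (simp add: growth_def)
lemma kappa_ge_1: "1 \<le> kappa" using growth_ge_3 by (simp add: kappa_def growth_def)
lemma kappa_le_2: "kappa \<le> 2"
  using growth_ge_3 card_A_ge_2 by (simp add: kappa_def growth_def field_simps)

lemma card_red_eq: "1 \<le> L \<Longrightarrow> real (N L) = kappa * growth ^ L"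
proof (induction L)
  case 0 then show ?case by simp
next
  case (Suc L)
  show ?case
  proof (cases "L = 0")
    case True then show ?thesis using growth_ge_3 by (simp add: card_red_eq_Suc kappa_def)
  next
    case False
    have "real (N (Suc L)) = growth * real (N L)"
      using False card_A_ge_2 by (simp add: card_red_eq_Suc growth_def of_nat_diff)
    then show ?thesis using Suc False by simp
  qed
qed

lemma card_red_eq_le: "real (N L) \<le> kappa * growth ^ L"
  by (cases "L = 0") (use kappa_ge_1 card_red_eq in \<open>auto simp: red_eq_0\<close>)

lemma card_red_eq_shift: "growth ^ j * real (N L) \<le> real (N (L + j))"
proof (cases "L = 0")
  case True
  show ?thesis
  proof (cases "j = 0")
    case True then show ?thesis using \<open>L = 0\<close> by simp
  next
    case False
    have "real (N (L + j)) = kappa * growth ^ j" using card_red_eq[of "L + j"] False True by simp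
    then show ?thesis using True kappa_ge_1 growth_ge_3 by (simp add: red_eq_0)
  qed
next
  case False
  then show ?thesis using card_red_eq[of L] card_red_eq[of "L + j"] by (simp add: power_add)
qed

lemma card_determined_block_le:
  assumes "S \<subseteq> red_eq A L" "\<forall>x\<in>S. \<forall>t<m. x ! (b + t) = F t (take (b + t) x)" "b + m \<le> L" "1 \<le> m"
  shows "real (card S) \<le> 2 * real (N L) / growth ^ m"
proof -
  have inj: "inj_on (\<lambda>x. (take b x, drop (b + m) x)) S"
    using determined_block_inj_on[of S L m b F] assms by (auto simp: red_eq_def)
  have img: "(\<lambda>x. (take b x, drop (b + m) x)) ` S \<subseteq> red_eq A b \<times> red_eq A (L - (b + m))"
  proof
    fix y assume "y \<in> (\<lambda>x. (take b x, drop (b + m) x)) ` S"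
    then obtain x where x: "x \<in> S" "y = (take b x, drop (b + m) x)" by auto
    have xr: "reduced x" "fst ` set x \<subseteq> A" "length x = L" using assms(1) x(1) by (auto simp: red_eq_def)
    have "fst ` set (take b x) \<subseteq> A" using xr(2) by (meson image_mono set_take_subset subset_trans)
    moreover have "fst ` set (drop (b + m) x) \<subseteq> A" using xr(2) by (meson image_mono set_drop_subset subset_trans)
    ultimately show "y \<in> red_eq A b \<times> red_eq A (L - (b + m))"
      using x(2) xr assms(3) by (auto simp: red_eq_def reduced_take reduced_drop)
  qed
  have "card S \<le> card (red_eq A b \<times> red_eq A (L - (b + m)))"
    using card_inj_on_le[OF inj img] finite_red_eq by simp
  then have "real (card S) \<le> real (N b) * real (N (L - (b + m)))"
    by (simp add: card_cartesian_product) (metis of_nat_le_iff of_nat_mult)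
  also have "\<dots> \<le> (kappa * growth ^ b) * (kappa * growth ^ (L - (b + m)))"
    using card_red_eq_le kappa_ge_1 growth_ge_3 by (intro mult_mono) auto
  also have "\<dots> = kappa * (kappa * growth ^ (b + (L - (b + m))))" by (simp add: power_add)
  also have "b + (L - (b + m)) = L - m" using assms(3) by simp
  also have "kappa * (kappa * growth ^ (L - m)) = kappa * growth ^ L / growth ^ m * kappa"
    using assms(3) growth_ge_3 by (simp add: power_diff)
  also have "\<dots> \<le> kappa * growth ^ L / growth ^ m * 2" using kappa_le_2 kappa_ge_1 growth_ge_3 by (intro mult_left_mono) auto
  also have "kappa * growth ^ L = real (N L)" using card_red_eq[of L] assms(3,4) by simp
  finally show ?thesis by (simp add: mult.commute)
qed

lemma card_red_le_filter: "card {x \<in> red_le A n. P x} = (\<Sum>L\<le>n. card {x \<in> red_eq A L. P x})"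
proof -
  have "{x \<in> red_le A n. P x} = (\<Union>L\<in>{..n}. {x \<in> red_eq A L. P x})"
    by (auto simp: red_le_def red_eq_def)
  moreover have "card (\<Union>L\<in>{..n}. {x \<in> red_eq A L. P x}) = (\<Sum>L\<le>n. card {x \<in> red_eq A L. P x})"
    by (rule card_UN_disjoint) (auto simp: red_eq_def intro: finite_subset[OF _ finite_red_eq])
  ultimately show ?thesis by simp
qed

lemma card_red_le: "card (red_le A n) = (\<Sum>L\<le>n. N L)"
  using card_red_le_filter[of n "\<lambda>_. True"] by simp

lemma card_red_le_filter_le:
  assumes "\<And>L. real (card {x \<in> red_eq A L. P x}) \<le> 2 * real (N L) / growth ^ m"
  shows "real (card {x \<in> red_le A n. P x}) \<le> 2 * real (card (red_le A n)) / growth ^ m"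
proof -
  have "real (card {x \<in> red_le A n. P x}) = (\<Sum>L\<le>n. real (card {x \<in> red_eq A L. P x}))"
    by (simp add: card_red_le_filter)
  also have "\<dots> \<le> (\<Sum>L\<le>n. 2 * real (N L) / growth ^ m)" by (intro sum_mono assms)
  also have "\<dots> = 2 * real (card (red_le A n)) / growth ^ m"
    by (simp add: card_red_le sum_divide_distrib sum_distrib_left)
  finally show ?thesis .
qed

lemma card_red_eq_determined_block:
  assumes "\<forall>x\<in>red_eq A L. P x \<longrightarrow> (\<forall>t<m. x ! (b + t) = F t (take (b + t) x))"
    "\<forall>x\<in>red_eq A L. P x \<longrightarrow> b + m \<le> L" "1 \<le> m"
  shows "real (card {x \<in> red_eq A L. P x}) \<le> 2 * real (N L) / growth ^ m"
proof (cases "b + m \<le> L")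
  case True
  show ?thesis by (rule card_determined_block_le[of _ L m b F]) (use assms True in auto)
next
  case False
  then have e: "{x \<in> red_eq A L. P x} = {}" using assms(2) by auto
  have "0 \<le> 2 * real (N L) / growth ^ m" using growth_ge_3 by simp
  then show ?thesis unfolding e by simp
qed

text \<open>In each of the following events the letters of the later window are functions of the
  letters before it.\<close>

lemma card_window_fixed:
  assumes "1 \<le> l"
  shows "real (card {x \<in> red_le A n. p + l \<le> length x \<and> take l (drop p x) = z})
     \<le> 2 * real (card (red_le A n)) / growth ^ l"
proof (rule card_red_le_filter_le,
    rule card_red_eq_determined_block[where b = p and F = "\<lambda>t _. z ! t"])
  fix L show "\<forall>x\<in>red_eq A L. p + l \<le> length x \<and> take l (drop p x) = z \<longrightarrow> (\<forall>t<l. x ! (p + t) = z ! t)"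
    by (auto simp: nth_window[symmetric])
qed (use assms in \<open>auto simp: red_eq_def\<close>)

lemma card_window_repeated:
  assumes "1 \<le> l" "p \<noteq> q"
  shows "real (card {x \<in> red_le A n. p + l \<le> length x \<and> q + l \<le> length x \<and>
      take l (drop p x) = take l (drop q x)})
     \<le> 2 * real (card (red_le A n)) / growth ^ l"
proof (rule card_red_le_filter_le,
    rule card_red_eq_determined_block[where b = "max p q" and F = "\<lambda>t pre. pre ! (min p q + t)"])
  fix L
  show "\<forall>x\<in>red_eq A L. p + l \<le> length x \<and> q + l \<le> length x \<and> take l (drop p x) = take l (drop q x) \<longrightarrow>
          (\<forall>t<l. x ! (max p q + t) = take (max p q + t) x ! (min p q + t))"
  proof (intro ballI impI allI)
    fix x t assume h: "p + l \<le> length x \<and> q + l \<le> length x \<and> take l (drop p x) = take l (drop q x)" and t: "t < l"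
    have "x ! (p + t) = x ! (q + t)" using h t nth_window[of t l p x] nth_window[of t l q x] by simp
    moreover have "min p q + t < max p q + t" using assms(2) by simp
    ultimately show "x ! (max p q + t) = take (max p q + t) x ! (min p q + t)"
      by (auto simp: max_def min_def)
  qed
qed (use assms in \<open>auto simp: red_eq_def\<close>)

lemma card_window_inverted:
  assumes "1 \<le> l" "p + l \<le> q \<or> q + l \<le> p"
  shows "real (card {x \<in> red_le A n. p + l \<le> length x \<and> q + l \<le> length x \<and>
      take l (drop p x) = inv_word (take l (drop q x))})
     \<le> 2 * real (card (red_le A n)) / growth ^ l"
proof (rule card_red_le_filter_le, rule card_red_eq_determined_block[where b = "max p q"
    and F = "\<lambda>t pre. inv_letter (pre ! (min p q + l - 1 - t))"])
  fix L
  show "\<forall>x\<in>red_eq A L. p + l \<le> length x \<and> q + l \<le> length x \<and> take l (drop p x) = inv_word (take l (drop q x)) \<longrightarrow>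
          (\<forall>t<l. x ! (max p q + t) = inv_letter (take (max p q + t) x ! (min p q + l - 1 - t)))"
  proof (intro ballI impI allI)
    fix x t assume h: "p + l \<le> length x \<and> q + l \<le> length x \<and> take l (drop p x) = inv_word (take l (drop q x))" and t: "t < l"
    have h2: "take l (drop q x) = inv_word (take l (drop p x))" using h by (metis inv_word_inv_word)
    have e1: "x ! (p + t) = inv_letter (x ! (q + l - 1 - t))"
    proof -
      have "x ! (p + t) = inv_word (take l (drop q x)) ! t" using h t nth_window[of t l p x] by simp
      also have "\<dots> = inv_letter (x ! (q + l - 1 - t))" by (rule nth_inv_word_window) (use t h in auto)
      finally show ?thesis .
    qed
    have e2: "x ! (q + t) = inv_letter (x ! (p + l - 1 - t))"
    proof -
      have "x ! (q + t) = take l (drop q x) ! t" using h t by simp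
      also have "\<dots> = inv_word (take l (drop p x)) ! t" using h2 by simp
      also have "\<dots> = inv_letter (x ! (p + l - 1 - t))" by (rule nth_inv_word_window) (use t h in auto)
      finally show ?thesis .
    qed
    show "x ! (max p q + t) = inv_letter (take (max p q + t) x ! (min p q + l - 1 - t))"
      using assms(2) e1 e2 t by (auto simp: max_def min_def)
  qed
qed (use assms in \<open>auto simp: red_eq_def\<close>)

lemma overlapping_inverted_windows:
  assumes "1 \<le> l" "reduced x" "p + l \<le> length x" "q + l \<le> length x" "p \<le> q" "q < p + l"
    "take l (drop p x) = inv_word (take l (drop q x))"
  shows False
proof -
  have mirror: "\<And>t. t < l \<Longrightarrow> x ! (p + t) = inv_letter (x ! (q + l - 1 - t))"
  proof -
    fix t assume t: "t < l"
    have "x ! (p + t) = inv_word (take l (drop q x)) ! t" using assms t nth_window[of t l p x] by simp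
    also have "\<dots> = inv_letter (x ! (q + l - 1 - t))" using t assms by (simp add: nth_inv_word_window)
    finally show "x ! (p + t) = inv_letter (x ! (q + l - 1 - t))" .
  qed
  define s where "s = p + q + l - 1"
  show False
  proof (cases "even s")
    case True
    then obtain u where u: "s = 2 * u" by blast
    have "p \<le> u" "u < p + l" using u assms(1,5,6) s_def by auto
    then have "x ! u = inv_letter (x ! (q + l - 1 - (u - p)))" using mirror[of "u - p"] by simp
    moreover have "q + l - 1 - (u - p) = u" using u s_def assms(1,5) \<open>p \<le> u\<close> by simp
    ultimately show False by simp
  next
    case False
    then obtain u where u: "s = 2 * u + 1" by (metis oddE)
    have "p \<le> u"
    proof (rule ccontr)
      assume "\<not> p \<le> u"
      then have "q + l \<le> p + 1" using u s_def by simp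
      then have "q = p \<and> l = 1" using assms(1,5) by simp
      then show False using u s_def by presburger
    qed
    have "u < p + l" using u assms(1,5,6) s_def by auto
    then have "x ! u = inv_letter (x ! (q + l - 1 - (u - p)))" using mirror[of "u - p"] \<open>p \<le> u\<close> by simp
    moreover have "q + l - 1 - (u - p) = Suc u" using u s_def assms(1,5) \<open>p \<le> u\<close> by simp
    ultimately have "x ! Suc u = inv_letter (x ! u)" by simp
    moreover have "Suc u < length x" using u s_def assms by simp
    ultimately show False using assms(2) by (simp add: reduced_iff_nth)
  qed
qed

lemma card_short_words:
  "real (card {x \<in> red_le A n. length x < n - l}) \<le> real (card (red_le A n)) / growth ^ l"
proof -
  have "card {x \<in> red_le A n. length x < n - l} = (\<Sum>L\<le>n. card {x \<in> red_eq A L. length x < n - l})"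
    by (rule card_red_le_filter)
  also have "\<dots> = (\<Sum>L\<le>n. if L < n - l then N L else 0)"
  proof (intro sum.cong refl)
    fix L
    show "card {x \<in> red_eq A L. length x < n - l} = (if L < n - l then N L else 0)"
    proof (cases "L < n - l")
      case True
      then have "{x \<in> red_eq A L. length x < n - l} = red_eq A L" by (auto simp: red_eq_def)
      then show ?thesis using True by simp
    next
      case False
      then have e: "{x \<in> red_eq A L. length x < n - l} = {}" by (auto simp: red_eq_def)
      show ?thesis unfolding e using False by simp
    qed
  qed
  also have "\<dots> = (\<Sum>L\<in>{L \<in> {..n}. L < n - l}. N L)"
    by (rule sum.inter_filter[symmetric]) simp
  also have "{L \<in> {..n}. L < n - l} = {..<n - l}" by auto
  finally have c: "real (card {x \<in> red_le A n. length x < n - l}) = (\<Sum>L\<in>{..<n - l}. real (N L))" by simp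
  have "growth ^ l * (\<Sum>L\<in>{..<n - l}. real (N L)) = (\<Sum>L\<in>{..<n - l}. growth ^ l * real (N L))"
    by (simp add: sum_distrib_left)
  also have "\<dots> \<le> (\<Sum>L\<in>{..<n - l}. real (N (L + l)))" by (intro sum_mono card_red_eq_shift)
  also have "\<dots> = (\<Sum>L\<in>(\<lambda>L. L + l) ` {..<n - l}. real (N L))"
    by (simp add: sum.reindex)
  also have "\<dots> \<le> (\<Sum>L\<le>n. real (N L))"
    by (intro sum_mono2) auto
  also have "\<dots> = real (card (red_le A n))" by (simp add: card_red_le)
  finally show ?thesis using c growth_ge_3 by (simp add: field_simps)
qed

lemma card_window_coincidence:
  assumes l: "1 \<le> l" and "\<not> (p = q \<and> \<not> s)"
  shows "real (card {x \<in> red_le A n. p + l \<le> length x \<and> q + l \<le> length x \<and>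
      take l (drop p x) = inv_if s (take l (drop q x))}) \<le> 2 * real (card (red_le A n)) / growth ^ l"
proof (cases s)
  case False
  then have "p \<noteq> q" using assms(2) by auto
  then show ?thesis using card_window_repeated[OF l, of p q n] False by (simp add: inv_if_def)
next
  case s: True
  show ?thesis
  proof (cases "p + l \<le> q \<or> q + l \<le> p")
    case True
    then show ?thesis using card_window_inverted[OF l True, of n] s by (simp add: inv_if_def)
  next
    case False
    have "\<not> (p + l \<le> length x \<and> q + l \<le> length x \<and> take l (drop p x) = inv_word (take l (drop q x)))"
      if "x \<in> red_le A n" for x
    proof
      assume w: "p + l \<le> length x \<and> q + l \<le> length x \<and> take l (drop p x) = inv_word (take l (drop q x))"
      have rx: "reduced x" using that by (simp add: red_le_def)
      show False
      proof (cases "p \<le> q")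
        case True
        then show False using overlapping_inverted_windows[OF l rx _ _ True _] w False by auto
      next
        case False
        have w': "take l (drop q x) = inv_word (take l (drop p x))" using w by (metis inv_word_inv_word)
        show False
          using overlapping_inverted_windows[OF l rx _ _ _ _ w'] w False \<open>\<not> (p + l \<le> q \<or> q + l \<le> p)\<close>
          by auto
      qed
    qed
    then have "{x \<in> red_le A n. p + l \<le> length x \<and> q + l \<le> length x \<and>
        take l (drop p x) = inv_word (take l (drop q x))} = {}" (is "?E = {}") by blast
    then show ?thesis unfolding inv_if_def if_P[OF s] \<open>?E = {}\<close> using growth_ge_3 by simp
  qed
qed

end

section \<open>Counting tuples\<close>

lemma card_lists_nth_fixed:
  assumes finR: "finite R" and i: "i < k" and d0: "d0 \<in> R"
  shows "card {ys. length ys = k \<and> set ys \<subseteq> R \<and> ys ! i = d0} \<le> card R ^ (k - 1)"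
proof -
  let ?S0 = "{ys. length ys = k \<and> set ys \<subseteq> R \<and> ys ! i = d0}"
  let ?f = "\<lambda>ys. take i ys @ drop (Suc i) ys"
  have inj: "inj_on ?f ?S0"
  proof (rule inj_onI)
    fix x y assume x: "x \<in> ?S0" and y: "y \<in> ?S0" and e: "?f x = ?f y"
    have lt: "length (take i x) = length (take i y)" using x y i by simp
    then have "take i x = take i y" "drop (Suc i) x = drop (Suc i) y" using e by auto
    then show "x = y" using x y i id_take_nth_drop[of i x] id_take_nth_drop[of i y] by simp
  qed
  have img: "?f ` ?S0 \<subseteq> {xs. set xs \<subseteq> R \<and> length xs = k - 1}"
  proof
    fix z assume "z \<in> ?f ` ?S0"
    then obtain ys where ys: "ys \<in> ?S0" "z = ?f ys" by auto
    have "set (take i ys) \<subseteq> R" "set (drop (Suc i) ys) \<subseteq> R"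
      using ys(1) set_take_subset set_drop_subset by fastforce+
    then show "z \<in> {xs. set xs \<subseteq> R \<and> length xs = k - 1}" using ys i by auto
  qed
  have "card ?S0 \<le> card {xs. set xs \<subseteq> R \<and> length xs = k - 1}"
    using card_inj_on_le[OF inj img finite_lists_length_eq[OF finR]] .
  then show ?thesis using card_lists_length_eq[OF finR] by simp
qed

text \<open>Counting tuples by conditioning on all coordinates but the i-th, which is first reset
  to d0.\<close>

lemma card_lists_nth_event:
  assumes finR: "finite R" and i: "i < k" and d0: "d0 \<in> R"
    and QM: "\<And>ys. real (card {x \<in> R. Q ys x}) \<le> M"
  shows "real (card {hs. length hs = k \<and> set hs \<subseteq> R \<and> Q (hs[i := d0]) (hs ! i)})
    \<le> M * real (card R ^ (k - 1))"
proof -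
  let ?S0 = "{ys. length ys = k \<and> set ys \<subseteq> R \<and> ys ! i = d0}"
  let ?E = "{hs. length hs = k \<and> set hs \<subseteq> R \<and> Q (hs[i := d0]) (hs ! i)}"
  have finS0: "finite ?S0"
    by (rule finite_subset[OF _ finite_lists_length_eq[OF finR, of k]]) auto
  have sub: "?E \<subseteq> (\<Union>ys\<in>?S0. (\<lambda>x. ys[i := x]) ` {x \<in> R. Q ys x})"
  proof
    fix hs assume hs: "hs \<in> ?E"
    have "length (hs[i := d0]) = k" using hs by simp
    moreover have "set (hs[i := d0]) \<subseteq> R" using hs d0 set_update_subset_insert[of hs i d0] by blast
    moreover have "hs[i := d0] ! i = d0" using hs i by simp
    ultimately have "hs[i := d0] \<in> ?S0" by blast
    moreover have "hs ! i \<in> {x \<in> R. Q (hs[i := d0]) x}" using hs i nth_mem by blast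
    moreover have "hs = (hs[i := d0])[i := hs ! i]" by simp
    ultimately show "hs \<in> (\<Union>ys\<in>?S0. (\<lambda>x. ys[i := x]) ` {x \<in> R. Q ys x})" by blast
  qed
  have M0: "0 \<le> M" using QM[of undefined] of_nat_0_le_iff order_trans by blast
  have "card ?E \<le> card (\<Union>ys\<in>?S0. (\<lambda>x. ys[i := x]) ` {x \<in> R. Q ys x})"
    by (rule card_mono[OF _ sub]) (intro finite_UN_I finS0 finite_imageI; use finR in simp)
  also have "\<dots> \<le> (\<Sum>ys\<in>?S0. card ((\<lambda>x. ys[i := x]) ` {x \<in> R. Q ys x}))"
    by (rule card_UN_le[OF finS0])
  also have "\<dots> \<le> (\<Sum>ys\<in>?S0. card {x \<in> R. Q ys x})"
    by (intro sum_mono card_image_le) (use finR in simp)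
  finally have "real (card ?E) \<le> (\<Sum>ys\<in>?S0. real (card {x \<in> R. Q ys x}))"
    unfolding of_nat_sum[symmetric] of_nat_le_iff .
  also have "\<dots> \<le> (\<Sum>ys\<in>?S0. M)" by (intro sum_mono QM)
  also have "\<dots> = real (card ?S0) * M" by simp
  also have "\<dots> \<le> real (card R ^ (k - 1)) * M"
    using card_lists_nth_fixed[OF finR i d0] M0 by (intro mult_right_mono) (simp only: of_nat_le_iff)
  finally show ?thesis by (simp add: mult.commute)
qed


context finite_alphabet
begin

definition tuples :: "nat \<Rightarrow> nat \<Rightarrow> 'a letter list list set" where
  "tuples n k = {hs. length hs = k \<and> set hs \<subseteq> red_le A n}"

lemma Nil_in_red_le: "[] \<in> red_le A n"
  by (simp add: red_le_def)

lemma card_tuples: "card (tuples n k) = card (red_le A n) ^ k"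
  using card_lists_length_eq[OF finite_red_le, of n k] by (simp add: tuples_def conj_commute)

lemma finite_tuples: "finite (tuples n k)"
  using finite_lists_length_eq[OF finite_red_le, of n k] by (simp add: tuples_def conj_commute)

abbreviation cR :: "nat \<Rightarrow> real" where
  "cR n \<equiv> real (card (red_le A n))"

lemma card_window_event_tuples:
  assumes l: "1 \<le> l" and nt: "\<not> (i = j \<and> p = q \<and> \<not> s)" and ij: "i < k" "j < k"
  shows "real (card {hs \<in> tuples n k. p + l \<le> length (hs ! i) \<and> q + l \<le> length (hs ! j) \<and>
            take l (drop p (hs ! i)) = inv_if s (take l (drop q (hs ! j)))})
     \<le> 2 * cR n / growth ^ l * real (card (red_le A n) ^ (k - 1))"
proof (cases "i = j")
  case False
  define Q where "Q ys x \<longleftrightarrow> p + l \<le> length x \<and> q + l \<le> length (ys ! j) \<and>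
      take l (drop p x) = inv_if s (take l (drop q (ys ! j)))"
    for ys :: "'a letter list list" and x :: "'a letter list"
  have e: "{hs \<in> tuples n k. p + l \<le> length (hs ! i) \<and> q + l \<le> length (hs ! j) \<and>
            take l (drop p (hs ! i)) = inv_if s (take l (drop q (hs ! j)))}
         = {hs. length hs = k \<and> set hs \<subseteq> red_le A n \<and> Q (hs[i := []]) (hs ! i)}"
    using False by (auto simp: tuples_def Q_def)
  have "real (card {x \<in> red_le A n. Q ys x}) \<le> 2 * cR n / growth ^ l" for ys
  proof -
    have "card {x \<in> red_le A n. Q ys x} \<le>
        card {x \<in> red_le A n. p + l \<le> length x \<and> take l (drop p x) = inv_if s (take l (drop q (ys ! j)))}"
      by (intro card_mono) (auto simp: Q_def intro: finite_subset[OF _ finite_red_le])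
    then show ?thesis
      using card_window_fixed[OF l, of n p "inv_if s (take l (drop q (ys ! j)))"] by linarith
  qed
  then show ?thesis unfolding e by (rule card_lists_nth_event[OF finite_red_le ij(1) Nil_in_red_le])
next
  case True
  define P where "P x \<longleftrightarrow> p + l \<le> length x \<and> q + l \<le> length x \<and>
      take l (drop p x) = inv_if s (take l (drop q x))" for x :: "'a letter list"
  have e: "{hs \<in> tuples n k. p + l \<le> length (hs ! i) \<and> q + l \<le> length (hs ! j) \<and>
            take l (drop p (hs ! i)) = inv_if s (take l (drop q (hs ! j)))}
         = {hs. length hs = k \<and> set hs \<subseteq> red_le A n \<and> (\<lambda>ys x. P x) (hs[i := []]) (hs ! i)}"
    using True by (auto simp: tuples_def P_def)
  have "real (card {x \<in> red_le A n. P x}) \<le> 2 * cR n / growth ^ l"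
    using card_window_coincidence[OF l] nt True by (simp add: P_def)
  then show ?thesis unfolding e by (intro card_lists_nth_event[OF finite_red_le ij(1) Nil_in_red_le])
qed

lemma card_short_entry_tuples:
  assumes "i < k"
  shows "real (card {hs \<in> tuples n k. length (hs ! i) < n - l})
     \<le> 2 * cR n / growth ^ l * real (card (red_le A n) ^ (k - 1))"
proof -
  have e: "{hs \<in> tuples n k. length (hs ! i) < n - l}
      = {hs. length hs = k \<and> set hs \<subseteq> red_le A n \<and> (\<lambda>ys x. length x < n - l) (hs[i := []]) (hs ! i)}"
    by (auto simp: tuples_def)
  have "0 \<le> cR n / growth ^ l" using growth_ge_3 by simp
  then have "real (card {x \<in> red_le A n. length x < n - l}) \<le> 2 * cR n / growth ^ l"
    using card_short_words[of n l] by simp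
  then show ?thesis unfolding e by (intro card_lists_nth_event[OF finite_red_le assms Nil_in_red_le])
qed

text \<open>The possible coincidences of windows in a tuple: (i, j, p, q, s) stands for the window of
  hs ! i at p agreeing with that of hs ! j at q, inverted if s holds.\<close>

definition window_indices :: "nat \<Rightarrow> nat \<Rightarrow> (nat \<times> nat \<times> nat \<times> nat \<times> bool) set" where
  "window_indices n k = {(i, j, p, q, s). i < k \<and> j < k \<and> p \<le> n \<and> q \<le> n \<and> \<not> (i = j \<and> p = q \<and> \<not> s)}"

definition window_event ::
  "nat \<Rightarrow> nat \<Rightarrow> nat \<Rightarrow> nat \<times> nat \<times> nat \<times> nat \<times> bool \<Rightarrow> 'a letter list list set" where
  "window_event n k l = (\<lambda>(i, j, p, q, s). {hs \<in> tuples n k.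
     p + l \<le> length (hs ! i) \<and> q + l \<le> length (hs ! j) \<and>
     take l (drop p (hs ! i)) = inv_if s (take l (drop q (hs ! j)))})"

lemma window_indices_subset:
  "window_indices n k \<subseteq> {..<k} \<times> {..<k} \<times> {..n} \<times> {..n} \<times> UNIV"
  by (auto simp: window_indices_def)

lemma finite_window_indices: "finite (window_indices n k)"
  by (rule finite_subset[OF window_indices_subset]) auto

lemma card_window_indices: "card (window_indices n k) \<le> 2 * k * k * (n + 1) * (n + 1)"
proof -
  have "card (window_indices n k) \<le> card ({..<k} \<times> {..<k} \<times> {..n} \<times> {..n} \<times> (UNIV :: bool set))"
    by (rule card_mono[OF _ window_indices_subset]) auto
  then show ?thesis by (simp add: card_cartesian_product algebra_simps)
qed

lemma not_window_tuple_imp: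
  assumes "window_size l n" "hs \<in> tuples n k" "\<not> window_tuple l n A hs"
  shows "hs \<in> (\<Union>i<k. {hs \<in> tuples n k. length (hs ! i) < n - l}) \<union>
    (\<Union>z\<in>window_indices n k. window_event n k l z)"
proof (rule ccontr)
  assume out: "hs \<notin> (\<Union>i<k. {hs \<in> tuples n k. length (hs ! i) < n - l}) \<union>
    (\<Union>z\<in>window_indices n k. window_event n k l z)"
  have hs: "length hs = k" "set hs \<subseteq> red_le A n" using assms(2) by (auto simp: tuples_def)
  have "window_tuple l n A hs"
  proof (intro window_tuple.intro window_tuple_axioms.intro assms(1))
    show "set hs \<subseteq> carrier (free_grp A)" using hs(2) by (auto simp: red_le_def)
    show "n - l \<le> length h" if h: "h \<in> set hs" for h
    proof -
      obtain i where "i < k" "h = hs ! i" using h hs(1) by (auto simp: in_set_conv_nth)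
      then show ?thesis using out assms(2) by (auto simp: not_less)
    qed
    fix i j p q s
    assume ij: "i < length hs" "j < length hs" "p + l \<le> length (hs ! i)" "q + l \<le> length (hs ! j)"
      "take l (drop p (hs ! i)) = inv_if s (take l (drop q (hs ! j)))"
    have "length (hs ! i) \<le> n" "length (hs ! j) \<le> n"
      using hs(2) ij(1,2) nth_mem by (fastforce simp: red_le_def)+
    then have "p \<le> n" "q \<le> n" using ij(3,4) by linarith+
    moreover have "(i, j, p, q, s) \<notin> window_indices n k"
      using out ij assms(2) by (auto simp: window_event_def)
    ultimately show "i = j \<and> p = q \<and> \<not> s"
      using ij(1,2) hs(1) by (auto simp: window_indices_def)
  qed
  then show False using assms(3) by simp
qed

lemma card_not_window_tuples:
  assumes l: "window_size l n" and k: "1 \<le> k"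
  shows "real (card {hs \<in> tuples n k. \<not> window_tuple l n A hs})
    \<le> (real k + 2 * real k * real k * (real n + 1) * (real n + 1)) * (2 / growth ^ l) * cR n ^ k"
proof -
  let ?S = "\<lambda>i. {hs \<in> tuples n k. length (hs ! i) < n - l}"
  let ?W = "window_event n k l"
  define B where "B = 2 * cR n / growth ^ l * real (card (red_le A n) ^ (k - 1))"
  have "cR n ^ k = cR n * cR n ^ (k - 1)"
    using k by (metis Suc_diff_le diff_Suc_1 power_Suc)
  then have B: "B = (2 / growth ^ l) * cR n ^ k" by (simp add: B_def)
  have l1: "1 \<le> l" using l by (simp add: window_size_def)
  have cS: "real (card (?S i)) \<le> B" if "i \<in> {..<k}" for i
    unfolding B_def using card_short_entry_tuples that by simp
  have cW: "real (card (?W z)) \<le> B" if z: "z \<in> window_indices n k" for z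
  proof -
    obtain i j p q s where ze: "z = (i, j, p, q, s)" by (cases z)
    have "i < k" "j < k" "\<not> (i = j \<and> p = q \<and> \<not> s)" using z ze by (auto simp: window_indices_def)
    then show ?thesis
      unfolding B_def ze window_event_def using card_window_event_tuples[OF l1] by simp
  qed
  have fW: "finite (?W z)" for z
    by (auto simp: window_event_def intro: finite_subset[OF _ finite_tuples] split: prod.splits)
  have "{hs \<in> tuples n k. \<not> window_tuple l n A hs}
      \<subseteq> (\<Union>i\<in>{..<k}. ?S i) \<union> (\<Union>z\<in>window_indices n k. ?W z)"
    using not_window_tuple_imp[OF l] by blast
  then have "card {hs \<in> tuples n k. \<not> window_tuple l n A hs}
      \<le> card ((\<Union>i\<in>{..<k}. ?S i) \<union> (\<Union>z\<in>window_indices n k. ?W z))"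
    by (rule card_mono[rotated])
      (intro finite_UnI finite_UN_I finite_window_indices fW; auto intro: finite_subset[OF _ finite_tuples])
  also have "\<dots> \<le> (\<Sum>i\<in>{..<k}. card (?S i)) + (\<Sum>z\<in>window_indices n k. card (?W z))"
    by (intro order.trans[OF card_Un_le] add_mono card_UN_le finite_window_indices) simp
  finally have "real (card {hs \<in> tuples n k. \<not> window_tuple l n A hs})
      \<le> (\<Sum>i\<in>{..<k}. real (card (?S i))) + (\<Sum>z\<in>window_indices n k. real (card (?W z)))"
    unfolding of_nat_sum[symmetric] of_nat_add[symmetric] of_nat_le_iff .
  also have "\<dots> \<le> (\<Sum>i\<in>{..<k}. B) + (\<Sum>z\<in>window_indices n k. B)"
    by (intro add_mono sum_mono cS cW)
  also have "\<dots> = (real k + real (card (window_indices n k))) * B"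
    by (simp add: algebra_simps)
  also have "\<dots> \<le> (real k + 2 * real k * real k * (real n + 1) * (real n + 1)) * B"
  proof -
    have "real (card (window_indices n k)) \<le> 2 * real k * real k * (real n + 1) * (real n + 1)"
      using card_window_indices[of n k]
      by (metis (mono_tags) of_nat_1 of_nat_add of_nat_le_iff of_nat_mult of_nat_numeral)
    moreover have "0 \<le> B" using growth_ge_3 by (simp add: B_def)
    ultimately show ?thesis by (intro mult_right_mono) auto
  qed
  finally show ?thesis by (simp only: B mult.assoc)
qed

abbreviation gen :: "'a letter list list \<Rightarrow> 'a letter list set" where
  "gen hs \<equiv> generate (free_grp A) (set hs)"

lemma T_set_eq: "T_set A k n = gen ` tuples n k"
  by (simp add: T_set_def tuples_def)

lemma X_subset_T_set: "X_set A k n \<subseteq> T_set A k n"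
  by (auto simp: X_set_def)

lemma finite_T_set: "finite (T_set A k n)"
  using finite_tuples by (simp add: T_set_eq)

lemma T_set_nonempty: "T_set A k n \<noteq> {}"
proof -
  have "replicate k [] \<in> tuples n k"
    using Nil_in_red_le by (simp add: tuples_def set_replicate_conv_if)
  then show ?thesis by (auto simp: T_set_eq)
qed

lemma T_set_minus_X_set_subset:
  "T_set A k n - X_set A k n \<subseteq> gen ` {hs \<in> tuples n k. \<not> window_tuple l n A hs}"
proof
  fix H assume H: "H \<in> T_set A k n - X_set A k n"
  then obtain hs where hs: "hs \<in> tuples n k" "H = gen hs" by (auto simp: T_set_eq)
  have "\<not> window_tuple l n A hs"
  proof
    assume "window_tuple l n A hs"
    then interpret window_tuple l n A hs .
    show False using malnormal_H pure_H hs H by (auto simp: X_set_def T_set_eq)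
  qed
  then show "H \<in> gen ` {hs \<in> tuples n k. \<not> window_tuple l n A hs}" using hs by auto
qed

lemma card_window_tuples:
  "card {hs \<in> tuples n k. window_tuple l n A hs} \<le> (2 * k) ^ k * card (T_set A k n)"
proof -
  define S where "S H = {h \<in> H. h \<noteq> [] \<and> length h \<le> n}" for H :: "'a letter list set"
  let ?G = "{hs \<in> tuples n k. window_tuple l n A hs}"
  have S: "finite (S (gen hs))" "card (S (gen hs)) \<le> 2 * k" "set hs \<subseteq> S (gen hs)" if "hs \<in> ?G" for hs
  proof -
    interpret window_tuple l n A hs using that by simp
    have "S (gen hs) \<subseteq> red_le A n" using H_in_carrier by (auto simp: S_def red_le_def)
    then show "finite (S (gen hs))" using finite_subset finite_red_le by blast
    show "card (S (gen hs)) \<le> 2 * k" using card_short_elements_H that by (simp add: S_def tuples_def)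
    show "set hs \<subseteq> S (gen hs)"
      using that gens_length window_pos window_le generate.incl[of _ "set hs" "free_grp A"]
      by (fastforce simp: S_def tuples_def red_le_def)
  qed
  have fG: "finite (gen ` ?G)" using finite_tuples by simp
  have "card ?G \<le> card (\<Union>H\<in>gen ` ?G. {hs. set hs \<subseteq> S H \<and> length hs = k})"
    using S(3) by (intro card_mono finite_UN_I fG finite_lists_length_eq)
      (auto intro: S(1) simp: tuples_def)
  also have "\<dots> \<le> (\<Sum>H\<in>gen ` ?G. card {hs. set hs \<subseteq> S H \<and> length hs = k})"
    by (rule card_UN_le[OF fG])
  also have "\<dots> \<le> (\<Sum>H\<in>gen ` ?G. (2 * k) ^ k)"
  proof (intro sum_mono)
    fix H assume "H \<in> gen ` ?G"
    then obtain hs where hs: "hs \<in> ?G" "H = gen hs" by blast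
    then have "card {hs. set hs \<subseteq> S H \<and> length hs = k} = card (S H) ^ k"
      using S(1) card_lists_length_eq by blast
    also have "\<dots> \<le> (2 * k) ^ k" using S(2)[OF hs(1)] hs(2) by (intro power_mono) simp_all
    finally show "card {hs. set hs \<subseteq> S H \<and> length hs = k} \<le> (2 * k) ^ k" .
  qed
  also have "\<dots> \<le> card (T_set A k n) * (2 * k) ^ k"
  proof -
    have "card (gen ` ?G) \<le> card (T_set A k n)"
      unfolding T_set_eq by (intro card_mono finite_imageI finite_tuples image_mono) auto
    then show ?thesis by simp
  qed
  finally show ?thesis by (simp add: mult.commute)
qed

end

section \<open>The estimate\<close>

definition (in finite_alphabet) error_term :: "nat \<Rightarrow> nat \<Rightarrow> nat \<Rightarrow> real" where
  "error_term n k l = (real k + 2 * real k * real k * (real n + 1) * (real n + 1)) * (2 / growth ^ l)"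

context finite_alphabet
begin

lemma error_term_nonneg: "0 \<le> error_term n k l"
  using growth_ge_3 by (simp add: error_term_def)

lemma card_T_set_minus_X_set_le:
  assumes "window_size l n" "1 \<le> k"
  shows "real (card (T_set A k n - X_set A k n)) \<le> error_term n k l * real (card (tuples n k))"
proof -
  let ?B = "{hs \<in> tuples n k. \<not> window_tuple l n A hs}"
  have "card (T_set A k n - X_set A k n) \<le> card (gen ` ?B)"
    using T_set_minus_X_set_subset by (intro card_mono finite_imageI) (auto simp: finite_tuples)
  also have "\<dots> \<le> card ?B" by (intro card_image_le) (simp add: finite_tuples)
  finally show ?thesis
    using card_not_window_tuples[OF assms] by (simp add: error_term_def card_tuples)
qed

lemma card_tuples_le_card_T_set:
  assumes "window_size l n" "1 \<le> k" "error_term n k l \<le> 1 / 2"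
  shows "real (card (tuples n k)) \<le> 2 * (2 * real k) ^ k * real (card (T_set A k n))"
proof -
  let ?G = "{hs \<in> tuples n k. window_tuple l n A hs}"
  let ?B = "{hs \<in> tuples n k. \<not> window_tuple l n A hs}"
  have "card (tuples n k) = card (?G \<union> ?B)"
    by (rule arg_cong[of _ _ card]) blast
  also have "\<dots> = card ?G + card ?B"
    by (rule card_Un_disjoint) (auto intro: finite_subset[OF _ finite_tuples])
  finally have "card ?G + card ?B = card (tuples n k)" by simp
  moreover have "real (card ?B) \<le> error_term n k l * real (card (tuples n k))"
    using card_not_window_tuples[OF assms(1,2)] by (simp add: error_term_def card_tuples)
  then have "real (card ?B) \<le> 1 / 2 * real (card (tuples n k))"
    using mult_right_mono[OF assms(3), of "real (card (tuples n k))"] by simp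
  moreover have "real (card ?G) \<le> (2 * real k) ^ k * real (card (T_set A k n))"
  proof -
    have "real (card ?G) \<le> real ((2 * k) ^ k * card (T_set A k n))"
      using card_window_tuples[of n k l] by (simp only: of_nat_le_iff)
    then show ?thesis by simp
  qed
  ultimately show ?thesis by linarith
qed

lemma one_minus_Q_X_le:
  assumes "window_size l n" "1 \<le> k" "error_term n k l \<le> 1 / 2"
  shows "\<bar>1 - Q_X A k n\<bar> \<le> 2 * (2 * real k) ^ k * error_term n k l"
proof -
  let ?T = "real (card (T_set A k n))"
  have T: "0 < ?T"
    using finite_T_set T_set_nonempty by (simp add: card_gt_0_iff)
  have "card (X_set A k n) \<le> card (T_set A k n)"
    by (intro card_mono finite_T_set X_subset_T_set)
  then have Q: "1 - Q_X A k n = real (card (T_set A k n - X_set A k n)) / ?T"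
    using T card_Diff_subset[OF finite_subset[OF X_subset_T_set finite_T_set] X_subset_T_set]
    by (simp add: Q_X_def of_nat_diff field_simps)
  have "real (card (T_set A k n - X_set A k n)) \<le> error_term n k l * real (card (tuples n k))"
    by (rule card_T_set_minus_X_set_le[OF assms(1,2)])
  also have "\<dots> \<le> error_term n k l * (2 * (2 * real k) ^ k * ?T)"
    by (rule mult_left_mono[OF card_tuples_le_card_T_set[OF assms] error_term_nonneg])
  finally have "real (card (T_set A k n - X_set A k n)) / ?T \<le> 2 * (2 * real k) ^ k * error_term n k l"
    using T by (simp add: pos_divide_le_eq mult_ac)
  then show ?thesis unfolding Q by simp
qed

lemma exp_le_3_pow_div_8: "exp ((ln 3 / 8) * real n) \<le> 3 * 3 ^ (n div 8)"
proof -
  have "real n \<le> 8 * real (n div 8) + 8" by linarith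
  then have "(ln 3 / 8) * real n \<le> (ln 3 / 8) * (8 * real (n div 8) + 8)"
    by (rule mult_left_mono) simp
  also have "\<dots> = real (n div 8) * ln 3 + ln 3" by (simp add: algebra_simps)
  finally have "exp ((ln 3 / 8) * real n) \<le> exp (real (n div 8) * ln 3 + ln 3)" by simp
  also have "\<dots> = 3 * 3 ^ (n div 8)" by (simp add: exp_add exp_of_nat_mult)
  finally show ?thesis .
qed

lemma error_term_le:
  assumes "1 \<le> k"
  shows "error_term n k (n div 8) \<le> 18 * real k ^ 2 * ((real n + 1) ^ 2 * exp (- (ln 3 / 8) * real n))"
proof -
  have a: "real k + 2 * real k * real k * (real n + 1) * (real n + 1) \<le> 3 * real k ^ 2 * (real n + 1) ^ 2"
  proof -
    have "real k \<le> real k ^ 2" using assms by (simp add: power2_eq_square)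
    also have "\<dots> \<le> real k ^ 2 * (real n + 1) ^ 2"
      using mult_left_mono[of 1 "(real n + 1) ^ 2" "real k ^ 2"] by simp
    finally show ?thesis by (simp add: power2_eq_square algebra_simps)
  qed
  have b: "2 / growth ^ (n div 8) \<le> 6 * exp (- (ln 3 / 8) * real n)"
  proof -
    have "(3::real) ^ (n div 8) \<le> growth ^ (n div 8)" using growth_ge_3 by (intro power_mono) auto
    then have "2 / growth ^ (n div 8) \<le> 2 / 3 ^ (n div 8)"
      using growth_ge_3 by (intro divide_left_mono) auto
    also have "\<dots> = 6 / (3 * 3 ^ (n div 8))" by simp
    also have "\<dots> \<le> 6 / exp ((ln 3 / 8) * real n)"
      by (rule divide_left_mono[OF exp_le_3_pow_div_8]) auto
    also have "\<dots> = 6 * exp (- (ln 3 / 8) * real n)" by (simp add: exp_minus field_simps)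
    finally show ?thesis .
  qed
  have "error_term n k (n div 8)
      \<le> (3 * real k ^ 2 * (real n + 1) ^ 2) * (6 * exp (- (ln 3 / 8) * real n))"
    unfolding error_term_def using a b growth_ge_3 by (intro mult_mono) auto
  then show ?thesis by (simp add: algebra_simps)
qed

theorem Q_X_exponential:
  assumes k: "1 \<le> k"
  shows "(\<lambda>n. 1 - Q_X A k n) \<in> O(\<lambda>n. exp (- (ln 3 / 16) * real n))"
proof -
  define F where "F n = (real n + 1) ^ 2 * exp (- (ln 3 / 8) * real n)" for n :: nat
  have "F \<longlonglongrightarrow> 0" unfolding F_def by real_asymp
  then have "eventually (\<lambda>n. F n < 1 / (36 * real k ^ 2)) sequentially"
    using k by (intro order_tendstoD(2)) auto
  then have "eventually (\<lambda>n. norm (1 - Q_X A k n) \<le> 36 * real k ^ 2 * (2 * real k) ^ k * norm (F n))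
      sequentially"
    using eventually_ge_at_top[of 8]
  proof eventually_elim
    case (elim n)
    have "window_size (n div 8) n" using elim(2) by unfold_locales auto
    moreover have e: "error_term n k (n div 8) \<le> 18 * real k ^ 2 * F n"
      using error_term_le[OF k] by (simp add: F_def)
    moreover have "18 * real k ^ 2 * F n \<le> 1 / 2" using elim(1) k by (simp add: field_simps)
    ultimately have "\<bar>1 - Q_X A k n\<bar> \<le> 2 * (2 * real k) ^ k * error_term n k (n div 8)"
      using one_minus_Q_X_le k by fastforce
    also have "\<dots> \<le> 2 * (2 * real k) ^ k * (18 * real k ^ 2 * F n)"
      using e by (intro mult_left_mono) auto
    finally show ?case by (simp add: F_def algebra_simps)
  qed
  then have "(\<lambda>n. 1 - Q_X A k n) \<in> O(F)" by (rule bigoI)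
  moreover have "F \<in> O(\<lambda>n. exp (- (ln 3 / 16) * real n))" unfolding F_def by real_asymp
  ultimately show ?thesis by (rule landau_o.big_trans)
qed

end

theorem mainTheorem5:
  fixes A :: "'a set" and k :: nat
  assumes "finite A" and "card A \<ge> 2" and "k \<ge> 1"
  shows "\<exists>c>0. (\<lambda>n. 1 - Q_X A k n) \<in> O(\<lambda>n. exp (- c * real n))"
proof -
  interpret finite_alphabet A using assms(1,2) by unfold_locales
  show ?thesis using Q_X_exponential[OF assms(3)] by (intro exI[of _ "ln 3 / 16"]) auto
qed

end
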